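(* Let $n \in \mathbb{N}$, let $A = \begin{pmatrix} B & C \\ C^T & D\end{pmatrix} \in \mathcal{M}_{2n}(\mathbb{R})$ be symmetric positive definite with $B,C,D \in \mathcal{M}_n(\mathbb{R})$, and let $M := \tfrac{1}{2}(B + D - i(C - C^T))$ and $N := \tfrac{1}{2}(B - D + i(C + C^T))$. Then the matrix $\begin{pmatrix} M & N \\ \overline{N} & \overline{M}\end{pmatrix} \in \mathcal{M}_{2n}(\mathbb{C})$ is Hermitian and has the same eigenvalues (with multiplicities) as $A$. Moreover $M$ and $M - N\overline{M}^{-1}\overline{N}$ are Hermitian positive definite and, for $k = 1,\dots,n$, $$\lambda_k(A) \le \lambda_k(M) \le \lambda_{k+n}(A), \qquad \lambda_k(A) \le \lambda_k\big(M - N\overline{M}^{-1}\overline{N}\big) \le \lambda_{k+n}(A).$$ In particular, the condition numbers (ratio of largest to smallest eigenvalue) of $M$ and of $M - N\overline{M}^{-1}\overline{N}$ are at most that of $A$.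
   Context: For a Hermitian matrix $H$ of size $m$, $\lambda_1(H) \le \dots \le \lambda_m(H)$ denote its eigenvalues in increasing order (with multiplicity). Bars denote entrywise complex conjugation; $(\cdot)^T$ is transpose. *)

theory Defs
  imports "Jordan_Normal_Form.Char_Poly" "Jordan_Normal_Form.Gauss_Jordan_Elimination"
begin

definition cconj_mat :: "complex mat \<Rightarrow> complex mat" where
  "cconj_mat H = map_mat cnj H"

definition hermitian_mat :: "complex mat \<Rightarrow> bool" where
  "hermitian_mat H \<longleftrightarrow> dim_row H = dim_col H \<and>
     (\<forall>i<dim_row H. \<forall>j<dim_row H. H $$ (i,j) = cnj (H $$ (j,i)))"

definition pos_def_cmat :: "complex mat \<Rightarrow> bool" where
  "pos_def_cmat H \<longleftrightarrow> hermitian_mat H \<and>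
     (\<forall>v \<in> carrier_vec (dim_row H). v \<noteq> 0\<^sub>v (dim_row H) \<longrightarrow>
        Re (\<Sum>i<dim_row H. \<Sum>j<dim_row H. cnj (v $ i) * H $$ (i,j) * v $ j) > 0)"

definition pos_def_rmat :: "real mat \<Rightarrow> bool" where
  "pos_def_rmat A \<longleftrightarrow> dim_row A = dim_col A \<and> transpose_mat A = A \<and>
     (\<forall>x \<in> carrier_vec (dim_row A). x \<noteq> 0\<^sub>v (dim_row A) \<longrightarrow> x \<bullet> (A *\<^sub>v x) > 0)"

definition eig_mset :: "complex mat \<Rightarrow> complex multiset" where
  "eig_mset H = proots (char_poly H)"

(* eigenvalues of a Hermitian matrix (all real) in increasing order, with multiplicity *)
definition eig_list :: "complex mat \<Rightarrow> real list" where
  "eig_list H = sorted_list_of_multiset (image_mset Re (eig_mset H))"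

(* lambda_k(H), 1-based indexing *)
definition lam :: "complex mat \<Rightarrow> nat \<Rightarrow> real" where
  "lam H k = eig_list H ! (k - 1)"

definition cond_num :: "complex mat \<Rightarrow> real" where
  "cond_num H = lam H (dim_row H) / lam H 1"

definition cmat :: "real mat \<Rightarrow> complex mat" where
  "cmat A = map_mat complex_of_real A"

end

(* Let U = (1/sqrt 2) [[I, I], [-i I, i I]], a unitary matrix. A block computation gives
   U^* A U = H = [[M, N], [conj N, conj M]], so H is Hermitian positive definite with the
   eigenvalues of A. M is the upper-left block of H and S = M - N (conj M)^-1 (conj N) its Schur
   complement, and their quadratic forms are restrictions of the one of H:
   q_M(u) = q_H(u, 0) and q_S(u) = q_H(u, -(conj M)^-1 (conj N) u) <= q_M(u).
   The Courant-Fischer min-max principle then gives lambda_k(H) <= lambda_k(T) <= lambda_(k+n)(H)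
   for T = M and T = S, and k = 1, k = n bound the condition numbers. *)

theory Submission
  imports Defs "Jordan_Normal_Form.Schur_Decomposition"
begin

section \<open>Adjoints, Hermitian matrices and quadratic forms\<close>

lemma dim_row_mat_adjoint[simp]: "dim_row (mat_adjoint X) = dim_col X"
  and dim_col_mat_adjoint[simp]: "dim_col (mat_adjoint X) = dim_row X"
  by (simp_all add: mat_adjoint_def)

lemma index_mat_adjoint[simp]:
  "i < dim_col X \<Longrightarrow> j < dim_row X \<Longrightarrow> mat_adjoint X $$ (i,j) = cnj ((X :: complex mat) $$ (j,i))"
  by (simp add: mat_adjoint_def mat_of_rows_def)

lemma mat_adjoint_carrier[simp]: "X \<in> carrier_mat a b \<Longrightarrow> mat_adjoint X \<in> carrier_mat b a"
  by auto

lemma mat_adjoint_mat_adjoint[simp]: "mat_adjoint (mat_adjoint X) = (X :: complex mat)"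
  by (rule eq_matI) auto

lemma mat_adjoint_zero[simp]: "mat_adjoint (0\<^sub>m a b) = (0\<^sub>m b a :: complex mat)"
  by (rule eq_matI) auto

lemma mat_adjoint_one[simp]: "mat_adjoint (1\<^sub>m n) = (1\<^sub>m n :: complex mat)"
  by (rule eq_matI) auto

lemma mat_adjoint_mult:
  fixes X Y :: "complex mat"
  assumes "X \<in> carrier_mat a b" "Y \<in> carrier_mat b c"
  shows "mat_adjoint (X * Y) = mat_adjoint Y * mat_adjoint X"
  using assms by (intro eq_matI) (auto simp: scalar_prod_def cnj_sum mult.commute intro!: sum.cong)

lemma mat_adjoint_minus:
  fixes X Y :: "complex mat"
  assumes "X \<in> carrier_mat a b" "Y \<in> carrier_mat a b"
  shows "mat_adjoint (X - Y) = mat_adjoint X - mat_adjoint Y"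
  using assms by (intro eq_matI) auto

lemma mat_adjoint_smult: "mat_adjoint (c \<cdot>\<^sub>m X) = cnj c \<cdot>\<^sub>m mat_adjoint (X :: complex mat)"
  by (intro eq_matI) auto

lemma mat_adjoint_four_block_mat:
  fixes A B C D :: "complex mat"
  assumes "A \<in> carrier_mat n1 m1" "B \<in> carrier_mat n1 m2" "C \<in> carrier_mat n2 m1" "D \<in> carrier_mat n2 m2"
  shows "mat_adjoint (four_block_mat A B C D)
    = four_block_mat (mat_adjoint A) (mat_adjoint C) (mat_adjoint B) (mat_adjoint D)"
  using assms by (intro eq_matI) auto

lemma unitary_mat_right_inverse:
  fixes U :: "complex mat"
  assumes "U \<in> carrier_mat n n" "mat_adjoint U * U = 1\<^sub>m n"
  shows "U * mat_adjoint U = 1\<^sub>m n"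
  using mat_mult_left_right_inverse[of "mat_adjoint U" n U] assms by auto

lemma scalar_prod_mat_vec_double_sum:
  fixes X :: "complex mat"
  assumes "X \<in> carrier_mat nr nc" "x \<in> carrier_vec nr" "y \<in> carrier_vec nc"
  shows "conjugate x \<bullet> (X *\<^sub>v y) = (\<Sum>i<nr. \<Sum>j<nc. cnj (x$i) * X$$(i,j) * y$j)"
  using assms by (auto simp: scalar_prod_def sum_distrib_left atLeast0LessThan mult.assoc intro!: sum.cong)

lemma scalar_prod_mat_adjoint:
  fixes X :: "complex mat"
  assumes "X \<in> carrier_mat nr nc" "x \<in> carrier_vec nr" "y \<in> carrier_vec nc"
  shows "conjugate x \<bullet> (X *\<^sub>v y) = conjugate (mat_adjoint X *\<^sub>v x) \<bullet> y"
proof -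
  have "conjugate (mat_adjoint X *\<^sub>v x) \<bullet> y = (\<Sum>j<nc. \<Sum>i<nr. cnj (x$i) * X$$(i,j) * y$j)"
    using assms by (auto simp: scalar_prod_def sum_distrib_right sum_distrib_left atLeast0LessThan
        mult.commute mult.left_commute intro!: sum.cong)
  then show ?thesis
    unfolding scalar_prod_mat_vec_double_sum[OF assms] by (simp add: sum.swap[of _ "{..<nc}"])
qed

lemma hermitian_matD:
  "hermitian_mat H \<Longrightarrow> i < dim_row H \<Longrightarrow> j < dim_row H \<Longrightarrow> H $$ (i,j) = cnj (H $$ (j,i))"
  unfolding hermitian_mat_def by blast

lemma hermitian_mat_iff_adjoint:
  assumes "H \<in> carrier_mat n n"
  shows "hermitian_mat H \<longleftrightarrow> mat_adjoint H = H"
proof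
  assume h: "hermitian_mat H"
  show "mat_adjoint H = H"
  proof (rule eq_matI)
    fix i j assume "i < dim_row H" "j < dim_col H"
    then have ij: "i < n" "j < n" using assms by auto
    then have "H $$ (j,i) = cnj (H $$ (i,j))" using hermitian_matD[OF h, of j i] assms by simp
    then show "mat_adjoint H $$ (i,j) = H $$ (i,j)" using ij assms by simp
  qed (use assms in auto)
next
  assume adj: "mat_adjoint H = H"
  have "H $$ (i,j) = cnj (H $$ (j,i))" if "i < n" "j < n" for i j
    using arg_cong[OF adj, of "\<lambda>X. X $$ (i,j)"] that assms by simp
  moreover have dims: "dim_row H = n" "dim_col H = n" using assms by auto
  ultimately show "hermitian_mat H" unfolding hermitian_mat_def dims by blast
qed

definition quad_form :: "complex mat \<Rightarrow> complex vec \<Rightarrow> complex" where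
  "quad_form H v = conjugate v \<bullet> (H *\<^sub>v v)"

lemma pos_def_cmat_iff_quad_form:
  assumes "H \<in> carrier_mat n n"
  shows "pos_def_cmat H \<longleftrightarrow> hermitian_mat H \<and>
    (\<forall>v \<in> carrier_vec n. v \<noteq> 0\<^sub>v n \<longrightarrow> Re (quad_form H v) > 0)"
  using assms scalar_prod_mat_vec_double_sum[OF assms]
  by (auto simp: pos_def_cmat_def quad_form_def)

lemma pos_def_cmatD:
  assumes "pos_def_cmat H" "H \<in> carrier_mat n n" "v \<in> carrier_vec n" "v \<noteq> 0\<^sub>v n"
  shows "Re (quad_form H v) > 0"
  using assms pos_def_cmat_iff_quad_form by blast

lemma pos_def_cmat_quad_form_nonneg:
  assumes "pos_def_cmat H" "H \<in> carrier_mat n n" "v \<in> carrier_vec n"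
  shows "Re (quad_form H v) \<ge> 0"
  using pos_def_cmatD[OF assms] assms(2,3)
  by (cases "v = 0\<^sub>v n") (auto simp: quad_form_def intro: less_imp_le)

lemma pos_def_cmat_det_nonzero:
  assumes "pos_def_cmat H" "H \<in> carrier_mat n n"
  shows "det H \<noteq> 0"
proof
  assume "det H = 0"
  then obtain v where v: "v \<in> carrier_vec n" "v \<noteq> 0\<^sub>v n" "H *\<^sub>v v = 0\<^sub>v n"
    using det_0_iff_vec_prod_zero_field[OF assms(2)] by blast
  then have "quad_form H v = 0" by (simp add: quad_form_def)
  then show False using pos_def_cmatD[OF assms v(1,2)] by simp
qed

lemma Re_conjugate_scalar_prod_self_nonneg: "Re (conjugate (y :: complex vec) \<bullet> y) \<ge> 0"
proof -
  have "Re (conjugate y \<bullet> y) = (\<Sum>i\<in>{0..<dim_vec y}. (cmod (y$i))^2)"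
    unfolding scalar_prod_def Re_sum cmod_power2 by (intro sum.cong) (auto simp: power2_eq_square)
  also have "\<dots> \<ge> 0" by (intro sum_nonneg) auto
  finally show ?thesis .
qed

section \<open>Spectral theorem for Hermitian matrices\<close>

lemma index_mat_adjoint_mult_self:
  fixes W :: "complex mat"
  assumes "W \<in> carrier_mat m n" "i < n" "j < n"
  shows "(mat_adjoint W * W) $$ (i,j) = col W j \<bullet>c col W i"
  using assms by (auto simp: scalar_prod_def mult.commute intro!: sum.cong)

lemma unitary_mat_mult:
  fixes U V :: "complex mat"
  assumes "U \<in> carrier_mat n n" "mat_adjoint U * U = 1\<^sub>m n"
    and "V \<in> carrier_mat n n" "mat_adjoint V * V = 1\<^sub>m n"
  shows "mat_adjoint (U * V) * (U * V) = 1\<^sub>m n"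
proof -
  have aU: "mat_adjoint U \<in> carrier_mat n n" and aV: "mat_adjoint V \<in> carrier_mat n n"
    using assms by auto
  have "mat_adjoint (U * V) * (U * V) = mat_adjoint V * mat_adjoint U * (U * V)"
    using mat_adjoint_mult[OF assms(1,3)] by simp
  also have "\<dots> = mat_adjoint V * ((mat_adjoint U * U) * V)"
    using assoc_mult_mat[OF aV aU mult_carrier_mat[OF assms(1,3)]] assoc_mult_mat[OF aU assms(1,3)]
    by simp
  finally show ?thesis using assms by simp
qed

lemma four_block_diag_mult:
  assumes "A1 \<in> carrier_mat a a" "D1 \<in> carrier_mat b b" "A2 \<in> carrier_mat a a" "D2 \<in> carrier_mat b b"
  shows "four_block_mat A1 (0\<^sub>m a b) (0\<^sub>m b a) D1 * four_block_mat A2 (0\<^sub>m a b) (0\<^sub>m b a) D2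
    = four_block_mat (A1 * A2) (0\<^sub>m a b) (0\<^sub>m b a) (D1 * (D2 :: 'c :: semiring_1 mat))"
  by (subst mult_four_block_mat[OF assms(1) zero_carrier_mat zero_carrier_mat assms(2) assms(3)
        zero_carrier_mat zero_carrier_mat assms(4)]) (use assms in simp)

lemma unitary_four_block_diag:
  fixes U :: "complex mat"
  assumes "U \<in> carrier_mat m m" "mat_adjoint U * U = 1\<^sub>m m"
  shows "mat_adjoint (four_block_mat (1\<^sub>m 1) (0\<^sub>m 1 m) (0\<^sub>m m 1) U)
      * four_block_mat (1\<^sub>m 1) (0\<^sub>m 1 m) (0\<^sub>m m 1) U = 1\<^sub>m (Suc m)"
  using assms by (simp add: mat_adjoint_four_block_mat[of _ 1 1 _ m _ m] four_block_diag_mult)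

lemma hermitian_mat_congruence:
  fixes H W :: "complex mat"
  assumes "hermitian_mat H" "H \<in> carrier_mat n n" "W \<in> carrier_mat n m"
  shows "hermitian_mat (mat_adjoint W * H * W)"
proof -
  have aW: "mat_adjoint W \<in> carrier_mat m n" using assms(3) by simp
  have "mat_adjoint (mat_adjoint W * H * W) = mat_adjoint W * mat_adjoint (mat_adjoint W * H)"
    using mat_adjoint_mult[OF mult_carrier_mat[OF aW assms(2)] assms(3)] by simp
  also have "\<dots> = mat_adjoint W * (mat_adjoint H * W)"
    using mat_adjoint_mult[OF aW assms(2)] by simp
  also have "\<dots> = mat_adjoint W * mat_adjoint H * W"
    using assoc_mult_mat[OF aW _ assms(3), of "mat_adjoint H"] assms(2) by simp
  moreover have "mat_adjoint W * H * W \<in> carrier_mat m m" using aW assms(2,3) by auto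
  ultimately show ?thesis
    using assms hermitian_mat_iff_adjoint[of H n] hermitian_mat_iff_adjoint[of _ m] by simp
qed

lemma eig_mset_unitary_congruence:
  fixes H W :: "complex mat"
  assumes W: "W \<in> carrier_mat n n" "mat_adjoint W * W = 1\<^sub>m n" and H: "H \<in> carrier_mat n n"
  shows "eig_mset (mat_adjoint W * H * W) = eig_mset H"
proof -
  have WW: "W * mat_adjoint W = 1\<^sub>m n" using unitary_mat_right_inverse[OF W] .
  have aW: "mat_adjoint W \<in> carrier_mat n n" using W by simp
  have aWH: "mat_adjoint W * H \<in> carrier_mat n n" using aW H by simp
  have "W * (mat_adjoint W * H * W) * mat_adjoint W = W * (mat_adjoint W * H * (W * mat_adjoint W))"
    using assoc_mult_mat[OF W(1) mult_carrier_mat[OF aWH W(1)] aW]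
      assoc_mult_mat[OF aWH W(1) aW] by simp
  also have "\<dots> = (W * mat_adjoint W) * H"
    using WW aWH assoc_mult_mat[OF W(1) aW H] right_mult_one_mat[OF aWH] by simp
  finally have "H = W * (mat_adjoint W * H * W) * mat_adjoint W" using WW H by simp
  then have "similar_mat H (mat_adjoint W * H * W)"
    using W H WW by (intro similar_matI[where P = W and Q = "mat_adjoint W" and n = n]) auto
  then show ?thesis by (simp add: eig_mset_def char_poly_similar)
qed

lemma proots_linear_prod: "proots (\<Prod>a\<leftarrow>as. [:- a, 1:]) = mset (as :: 'a :: idom list)"
proof (induction as)
  case (Cons a as)
  have nz: "(\<Prod>a\<leftarrow>as. [:- a, 1:]) \<noteq> 0" by (auto simp: prod_list_zero_iff)
  have "proots (\<Prod>a\<leftarrow>a # as. [:- a, 1:]) = proots ([:-a, 1:] * (\<Prod>a\<leftarrow>as. [:- a, 1:]))" by simp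
  also have "\<dots> = proots [:-a, 1:] + proots (\<Prod>a\<leftarrow>as. [:- a, 1:])"
    by (rule proots_mult) (use nz in auto)
  finally show ?case using Cons by simp
qed simp

lemma eig_mset_factorized:
  assumes "H \<in> carrier_mat n n"
  obtains as where "length as = n" "eig_mset H = mset as"
  using char_poly_factorized[OF assms] by (auto simp: eig_mset_def proots_linear_prod)

lemma eigenvalue_if_mem_eig_mset:
  assumes "H \<in> carrier_mat n n" "e \<in># eig_mset H"
  shows "eigenvalue H e"
proof -
  have "char_poly H \<noteq> 0" using degree_monic_char_poly[OF assms(1)] by auto
  then have "poly (char_poly H) e = 0" using assms(2) set_count_proots by (force simp: eig_mset_def)
  then show ?thesis using eigenvalue_root_char_poly[OF assms(1)] by simp
qed

lemma eig_mset_four_block_diag: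
  assumes "A \<in> carrier_mat m m"
  shows "eig_mset (four_block_mat (mat 1 1 (\<lambda>_. e)) (0\<^sub>m 1 m) (0\<^sub>m m 1) A) = add_mset e (eig_mset A)"
proof -
  have "char_poly (four_block_mat (mat 1 1 (\<lambda>_. e)) (0\<^sub>m 1 m) (0\<^sub>m m 1) A)
      = char_poly (mat 1 1 (\<lambda>_. e)) * char_poly A"
    by (rule char_poly_four_block_zeros_col[OF _ _ assms]) auto
  also have "char_poly (mat 1 1 (\<lambda>_. e)) = [:-e, 1:]"
    by (simp add: char_poly_defs det_def sign_def)
  finally have cp: "char_poly (four_block_mat (mat 1 1 (\<lambda>_. e)) (0\<^sub>m 1 m) (0\<^sub>m m 1) A)
      = [:-e, 1:] * char_poly A" .
  have "char_poly A \<noteq> 0" using degree_monic_char_poly[OF assms] by auto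
  then show ?thesis unfolding eig_mset_def cp by (subst proots_mult) auto
qed

lemma hermitian_eigenvalue_real:
  assumes h: "hermitian_mat H" and H: "H \<in> carrier_mat n n" and "eigenvalue H e"
  shows "e = complex_of_real (Re e)"
proof -
  obtain v where ev: "eigenvector H v e" using \<open>eigenvalue H e\<close> unfolding eigenvalue_def by blast
  have v: "v \<in> carrier_vec n" "v \<noteq> 0\<^sub>v n" "H *\<^sub>v v = e \<cdot>\<^sub>v v"
    using ev H unfolding eigenvector_def by auto
  have "conjugate v \<bullet> v \<noteq> 0"
    using conjugate_square_greater_0_vec[OF v(1)] v comm_scalar_prod[of "conjugate v" n v] by auto
  moreover have "e * (conjugate v \<bullet> v) = cnj e * (conjugate v \<bullet> v)"
    using scalar_prod_mat_adjoint[OF H v(1) v(1)] v hermitian_mat_iff_adjoint[OF H] h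
    by (simp add: conjugate_smult_vec)
  ultimately have "e = cnj e" by simp
  then show ?thesis by (simp add: complex_eq_iff)
qed

definition normalize_vec :: "complex vec \<Rightarrow> complex vec" where
  "normalize_vec w = complex_of_real (1 / sqrt (Re (w \<bullet>c w))) \<cdot>\<^sub>v w"

lemma normalize_vec_carrier[simp]: "w \<in> carrier_vec m \<Longrightarrow> normalize_vec w \<in> carrier_vec m"
  by (simp add: normalize_vec_def)

lemma cscalar_prod_normalize_vec:
  assumes "v \<in> carrier_vec m" "w \<in> carrier_vec m"
  shows "normalize_vec v \<bullet>c normalize_vec w
    = complex_of_real (1 / sqrt (Re (v \<bullet>c v))) * complex_of_real (1 / sqrt (Re (w \<bullet>c w))) * (v \<bullet>c w)"
  using assms
  by (simp add: normalize_vec_def conjugate_smult_vec scalar_prod_smult_left scalar_prod_smult_right)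

lemma normalize_vec_unit:
  assumes "w \<in> carrier_vec m" "w \<noteq> 0\<^sub>v m"
  shows "normalize_vec w \<bullet>c normalize_vec w = 1"
proof -
  define r where "r = Re (w \<bullet>c w)"
  have "w \<bullet>c w > 0" using assms by simp
  then have r: "w \<bullet>c w = complex_of_real r" "r > 0"
    by (auto simp: r_def complex_eq_iff less_complex_def)
  have "normalize_vec w \<bullet>c normalize_vec w
      = complex_of_real (1 / sqrt r) * complex_of_real (1 / sqrt r) * complex_of_real r"
    by (simp only: cscalar_prod_normalize_vec[OF assms(1) assms(1)] r(1) Re_complex_of_real)
  also have "\<dots> = complex_of_real (1 / sqrt r * (1 / sqrt r) * r)" by (simp only: of_real_mult)
  also have "1 / sqrt r * (1 / sqrt r) * r = 1" using r(2) by (simp add: field_simps)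
  finally show ?thesis by simp
qed

lemma normalize_vec_id: "w \<bullet>c w = 1 \<Longrightarrow> normalize_vec w = w"
  by (simp add: normalize_vec_def)

lemma col_mat_of_normalized_cols:
  assumes "set ws \<subseteq> carrier_vec m" "i < length ws"
  shows "col (mat_of_cols m (map normalize_vec ws)) i = normalize_vec (ws ! i)"
proof -
  have "ws ! i \<in> carrier_vec m" using assms by auto
  then show ?thesis using assms(2) by (subst col_mat_of_cols) auto
qed

lemma unitary_mat_of_normalized_cols:
  assumes ws: "set ws \<subseteq> carrier_vec m" "corthogonal ws" "length ws = m"
  defines "W \<equiv> mat_of_cols m (map normalize_vec ws)"
  shows "mat_adjoint W * W = 1\<^sub>m m"
proof (rule eq_matI)
  fix i j assume "i < dim_row (1\<^sub>m m)" "j < dim_col (1\<^sub>m m)"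
  then have ij: "i < m" "j < m" by auto
  then have wc: "ws ! i \<in> carrier_vec m" "ws ! j \<in> carrier_vec m" using ws by auto
  have W: "W \<in> carrier_mat m m" using ws by (auto simp: W_def)
  have "(mat_adjoint W * W) $$ (i,j) = normalize_vec (ws ! j) \<bullet>c normalize_vec (ws ! i)"
    using index_mat_adjoint_mult_self[OF W ij] col_mat_of_normalized_cols[OF ws(1)] ws(3) ij
    by (simp add: W_def)
  also have "\<dots> = 1\<^sub>m m $$ (i,j)"
  proof (cases "i = j")
    case True
    have "ws ! i \<bullet>c ws ! i \<noteq> 0" using corthogonalD[OF ws(2)] ws(3) ij by auto
    then have "ws ! i \<noteq> 0\<^sub>v m" by auto
    then show ?thesis using normalize_vec_unit wc True ij by simp
  next
    case False
    then show ?thesis using cscalar_prod_normalize_vec wc corthogonalD[OF ws(2)] ws(3) ij by auto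
  qed
  finally show "(mat_adjoint W * W) $$ (i,j) = 1\<^sub>m m $$ (i,j)" .
qed (use ws in \<open>auto simp: W_def\<close>)

lemma unitary_completion:
  fixes v :: "complex vec"
  assumes v: "v \<in> carrier_vec m" and v1: "v \<bullet>c v = 1"
  shows "\<exists>W \<in> carrier_mat m m. mat_adjoint W * W = 1\<^sub>m m \<and> col W 0 = v"
proof -
  interpret cof_vec_space m "TYPE(complex)" .
  have v0: "v \<noteq> 0\<^sub>v m" using v1 by auto
  define b where "b = basis_completion v"
  from basis_completion[OF v v0, folded b_def]
  have dist_b: "distinct b" and indep: "\<not> lin_dep (set b)" and b: "set b \<subseteq> carrier_vec m"
    and hdb: "hd b = v" and len_b: "length b = m" by auto
  have m: "m \<noteq> 0" using v0 by (auto intro!: eq_vecI simp: carrier_vecD[OF v])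
  from hdb len_b m obtain vs where bv: "b = v # vs" by (cases b, auto)
  define ws where "ws = gram_schmidt m b"
  from gram_schmidt_result[OF b dist_b indep refl, folded ws_def]
  have ws: "set ws \<subseteq> carrier_vec m" "corthogonal ws" "length ws = m" by (auto simp: len_b)
  from gram_schmidt_hd[OF v, of vs, folded bv] have "hd ws = v" unfolding ws_def .
  then have "ws ! 0 = v" using ws(3) m by (cases ws, auto)
  then have "col (mat_of_cols m (map normalize_vec ws)) 0 = v"
    using col_mat_of_normalized_cols[OF ws(1), of 0] m ws(3) v1 normalize_vec_id by simp
  moreover have "mat_of_cols m (map normalize_vec ws) \<in> carrier_mat m m" using ws by auto
  ultimately show ?thesis using unitary_mat_of_normalized_cols[OF ws] by blast
qed

lemma unitary_congruence_first_col:
  fixes H W :: "complex mat"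
  assumes W: "W \<in> carrier_mat n n" "mat_adjoint W * W = 1\<^sub>m n" and H: "H \<in> carrier_mat n n"
    and ev: "H *\<^sub>v col W 0 = e \<cdot>\<^sub>v col W 0" and i: "i < n"
  shows "(mat_adjoint W * H * W) $$ (i, 0) = (if i = 0 then e else 0)"
proof -
  have aW: "mat_adjoint W \<in> carrier_mat n n" using W by simp
  have "(mat_adjoint W * H * W) $$ (i, 0) = row (mat_adjoint W) i \<bullet> col (H * W) 0"
    using assoc_mult_mat[OF aW H W(1)] i W H by simp
  also have "col (H * W) 0 = e \<cdot>\<^sub>v col W 0" using col_mult2[OF H W(1), of 0] ev i by simp
  also have "row (mat_adjoint W) i \<bullet> (e \<cdot>\<^sub>v col W 0) = e * (row (mat_adjoint W) i \<bullet> col W 0)"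
    using W i by simp
  also have "row (mat_adjoint W) i \<bullet> col W 0 = (mat_adjoint W * W) $$ (i, 0)" using W(1) i by simp
  finally show ?thesis using W(2) i by simp
qed

lemma hermitian_mat_split_first_col:
  fixes H :: "complex mat"
  assumes h: "hermitian_mat H" and Hc: "H \<in> carrier_mat (Suc m) (Suc m)"
    and col0: "\<And>i. i < Suc m \<Longrightarrow> H $$ (i, 0) = (if i = 0 then complex_of_real r else 0)"
  defines "A \<equiv> mat m m (\<lambda>(i,j). H $$ (Suc i, Suc j))"
  shows "H = four_block_mat (mat 1 1 (\<lambda>_. complex_of_real r)) (0\<^sub>m 1 m) (0\<^sub>m m 1) A"
    and "hermitian_mat A"
proof -
  have row0: "H $$ (0, j) = (if j = 0 then complex_of_real r else 0)" if "j < Suc m" for j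
    using hermitian_matD[OF h, of 0 j] col0[OF that] Hc that by auto
  show "H = four_block_mat (mat 1 1 (\<lambda>_. complex_of_real r)) (0\<^sub>m 1 m) (0\<^sub>m m 1) A"
  proof (rule eq_matI)
    fix i j assume "i < dim_row (four_block_mat (mat 1 1 (\<lambda>_. complex_of_real r)) (0\<^sub>m 1 m) (0\<^sub>m m 1) A)"
      "j < dim_col (four_block_mat (mat 1 1 (\<lambda>_. complex_of_real r)) (0\<^sub>m 1 m) (0\<^sub>m m 1) A)"
    then have ij: "i < Suc m" "j < Suc m" by (simp_all add: A_def)
    show "H $$ (i, j) = four_block_mat (mat 1 1 (\<lambda>_. complex_of_real r)) (0\<^sub>m 1 m) (0\<^sub>m m 1) A $$ (i, j)"
    proof (cases "i = 0 \<or> j = 0")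
      case True
      then show ?thesis using col0[OF ij(1)] row0[OF ij(2)] ij by (auto simp: A_def)
    next
      case False
      then obtain i' j' where "i = Suc i'" "j = Suc j'" by (cases i; cases j) auto
      then show ?thesis using ij by (auto simp: A_def)
    qed
  qed (use Hc in \<open>auto simp: A_def\<close>)
  show "hermitian_mat A"
    unfolding hermitian_mat_def
  proof (intro conjI allI impI)
    fix i j assume "i < dim_row A" "j < dim_row A"
    then show "A $$ (i, j) = cnj (A $$ (j, i))"
      using hermitian_matD[OF h, of "Suc i" "Suc j"] Hc by (simp add: A_def)
  qed (simp add: A_def)
qed

lemma hermitian_unitary_deflation:
  fixes H :: "complex mat"
  assumes h: "hermitian_mat H" and Hc: "H \<in> carrier_mat (Suc m) (Suc m)"
    and ev: "eigenvalue H (complex_of_real r)"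
  obtains W A where "W \<in> carrier_mat (Suc m) (Suc m)" "mat_adjoint W * W = 1\<^sub>m (Suc m)"
    "A \<in> carrier_mat m m" "hermitian_mat A"
    "mat_adjoint W * H * W = four_block_mat (mat 1 1 (\<lambda>_. complex_of_real r)) (0\<^sub>m 1 m) (0\<^sub>m m 1) A"
proof -
  define w where "w = find_eigenvector H (complex_of_real r)"
  have "eigenvector H w (complex_of_real r)" using find_eigenvector[OF Hc ev] by (simp add: w_def)
  then have w: "w \<in> carrier_vec (Suc m)" "w \<noteq> 0\<^sub>v (Suc m)" "H *\<^sub>v w = complex_of_real r \<cdot>\<^sub>v w"
    unfolding eigenvector_def using Hc by auto
  have "normalize_vec w \<in> carrier_vec (Suc m)" "normalize_vec w \<bullet>c normalize_vec w = 1"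
    using w normalize_vec_unit by auto
  then obtain W where W: "W \<in> carrier_mat (Suc m) (Suc m)" "mat_adjoint W * W = 1\<^sub>m (Suc m)"
    and col_W: "col W 0 = normalize_vec w"
    using unitary_completion by blast
  have "H *\<^sub>v col W 0 = complex_of_real r \<cdot>\<^sub>v col W 0"
    using w Hc by (simp add: col_W normalize_vec_def mult_mat_vec smult_smult_assoc mult.commute)
  then have "(mat_adjoint W * H * W) $$ (i, 0) = (if i = 0 then complex_of_real r else 0)"
    if "i < Suc m" for i
    using unitary_congruence_first_col[OF W Hc _ that] by simp
  moreover have "mat_adjoint W * H * W \<in> carrier_mat (Suc m) (Suc m)" using W Hc by auto
  ultimately show thesis
    using hermitian_mat_split_first_col[OF hermitian_mat_congruence[OF h Hc W(1)]] that[OF W]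
    by (metis (no_types, lifting) dim_col_mat(1) dim_row_mat(1) carrier_matI)
qed

definition real_diag_mat :: "real list \<Rightarrow> complex mat" where
  "real_diag_mat d = mat_diag (length d) (\<lambda>i. complex_of_real (d ! i))"

lemma dim_row_real_diag_mat[simp]: "dim_row (real_diag_mat d) = length d"
  and dim_col_real_diag_mat[simp]: "dim_col (real_diag_mat d) = length d"
  by (simp_all add: real_diag_mat_def mat_diag_def)

lemma real_diag_mat_carrier[simp]: "real_diag_mat d \<in> carrier_mat (length d) (length d)"
  by (simp add: carrier_matI)

lemma real_diag_mat_Cons:
  "real_diag_mat (r # d)
    = four_block_mat (mat 1 1 (\<lambda>_. complex_of_real r)) (0\<^sub>m 1 (length d)) (0\<^sub>m (length d) 1) (real_diag_mat d)"
  by (intro eq_matI) (auto simp: real_diag_mat_def mat_diag_def nth_Cons')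

lemma unitary_congruence_intertwine:
  fixes H W B D :: "complex mat"
  assumes W: "W \<in> carrier_mat n n" "mat_adjoint W * W = 1\<^sub>m n"
    and H: "H \<in> carrier_mat n n" and B: "B \<in> carrier_mat n n" and D: "D \<in> carrier_mat n n"
    and HBD: "mat_adjoint W * H * W * B = B * D"
  shows "H * (W * B) = (W * B) * D"
proof -
  have aW: "mat_adjoint W \<in> carrier_mat n n" using W by simp
  have HW: "H * W \<in> carrier_mat n n" using H W by simp
  define K where "K = mat_adjoint W * H * W"
  have K: "K \<in> carrier_mat n n" using mult_carrier_mat[OF mult_carrier_mat[OF aW H] W(1)] by (simp add: K_def)
  have "W * K = (W * mat_adjoint W) * (H * W)"
    using assoc_mult_mat[OF aW H W(1)] assoc_mult_mat[OF W(1) aW HW] by (simp add: K_def)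
  then have WK: "W * K = H * W"
    using unitary_mat_right_inverse[OF W] left_mult_one_mat[OF HW] by simp
  have "H * (W * B) = W * K * B" using assoc_mult_mat[OF H W(1) B] WK by simp
  also have "\<dots> = W * (B * D)" using assoc_mult_mat[OF W(1) K B] HBD by (simp add: K_def)
  also have "\<dots> = (W * B) * D" using assoc_mult_mat[OF W(1) B D] by simp
  finally show ?thesis .
qed

lemma four_block_diag_intertwine:
  fixes A U :: "complex mat"
  assumes A: "A \<in> carrier_mat m m" and U: "U \<in> carrier_mat m m" and d: "length d = m"
    and AU: "A * U = U * real_diag_mat d"
  shows "four_block_mat (mat 1 1 (\<lambda>_. complex_of_real r)) (0\<^sub>m 1 m) (0\<^sub>m m 1) A
      * four_block_mat (1\<^sub>m 1) (0\<^sub>m 1 m) (0\<^sub>m m 1) U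
    = four_block_mat (1\<^sub>m 1) (0\<^sub>m 1 m) (0\<^sub>m m 1) U * real_diag_mat (r # d)"
proof -
  define R where "R = mat 1 1 (\<lambda>_. complex_of_real r)"
  have R: "R \<in> carrier_mat 1 1" by (simp add: R_def)
  have D: "real_diag_mat d \<in> carrier_mat m m" using real_diag_mat_carrier[of d] d by simp
  have "four_block_mat R (0\<^sub>m 1 m) (0\<^sub>m m 1) A * four_block_mat (1\<^sub>m 1) (0\<^sub>m 1 m) (0\<^sub>m m 1) U
      = four_block_mat (R * 1\<^sub>m 1) (0\<^sub>m 1 m) (0\<^sub>m m 1) (A * U)"
    by (rule four_block_diag_mult[OF R A one_carrier_mat U])
  also have "\<dots> = four_block_mat (1\<^sub>m 1 * R) (0\<^sub>m 1 m) (0\<^sub>m m 1) (U * real_diag_mat d)"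
    using R AU by simp
  also have "\<dots> = four_block_mat (1\<^sub>m 1) (0\<^sub>m 1 m) (0\<^sub>m m 1) U * real_diag_mat (r # d)"
    unfolding real_diag_mat_Cons d R_def[symmetric]
    by (rule four_block_diag_mult[symmetric, OF one_carrier_mat U R D])
  finally show ?thesis unfolding R_def .
qed

lemma hermitian_min_eigenvalue:
  assumes h: "hermitian_mat H" and Hc: "H \<in> carrier_mat (Suc m) (Suc m)"
  obtains r where "eigenvalue H (complex_of_real r)" "\<And>a. a \<in># eig_mset H \<Longrightarrow> r \<le> Re a"
proof -
  obtain as where as: "length as = Suc m" "eig_mset H = mset as" using eig_mset_factorized[OF Hc] .
  define r where "r = Min (Re ` set as)"
  have "r \<in> Re ` set as" using as(1) unfolding r_def by (intro Min_in) auto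
  then obtain e where e: "e \<in># eig_mset H" "Re e = r" using as(2) by auto
  have "eigenvalue H e" using eigenvalue_if_mem_eig_mset[OF Hc e(1)] .
  then have "eigenvalue H (complex_of_real r)" using hermitian_eigenvalue_real[OF h Hc] e(2) by metis
  moreover have "r \<le> Re a" if "a \<in># eig_mset H" for a using that as(2) unfolding r_def by auto
  ultimately show thesis using that by blast
qed

theorem hermitian_spectral_decomposition:
  fixes H :: "complex mat"
  assumes "hermitian_mat H" "H \<in> carrier_mat m m"
  shows "\<exists>U d. U \<in> carrier_mat m m \<and> mat_adjoint U * U = 1\<^sub>m m \<and> length d = m \<and> sorted d
     \<and> H * U = U * real_diag_mat d \<and> eig_mset H = mset (map complex_of_real d)"
  using assms
proof (induction m arbitrary: H)
  case 0
  obtain as where "length as = 0" "eig_mset H = mset as" using eig_mset_factorized[OF 0(2)] .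
  moreover have "H * 1\<^sub>m 0 = 1\<^sub>m 0 * real_diag_mat []"
    using 0(2) real_diag_mat_carrier[of "[]"] by (intro eq_matI) auto
  ultimately show ?case by (intro exI[of _ "1\<^sub>m 0"] exI[of _ "[]"]) auto
next
  case (Suc m)
  obtain r where ev: "eigenvalue H (complex_of_real r)" and r_min: "\<And>a. a \<in># eig_mset H \<Longrightarrow> r \<le> Re a"
    using hermitian_min_eigenvalue[OF Suc(2,3)] by blast
  obtain W A where W: "W \<in> carrier_mat (Suc m) (Suc m)" "mat_adjoint W * W = 1\<^sub>m (Suc m)"
    and A: "A \<in> carrier_mat m m" "hermitian_mat A"
    and blk: "mat_adjoint W * H * W = four_block_mat (mat 1 1 (\<lambda>_. complex_of_real r)) (0\<^sub>m 1 m) (0\<^sub>m m 1) A"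
    using hermitian_unitary_deflation[OF Suc(2,3) ev] .
  obtain U d where U: "U \<in> carrier_mat m m" "mat_adjoint U * U = 1\<^sub>m m"
    and d: "length d = m" "sorted d" and AU: "A * U = U * real_diag_mat d"
    and eigA: "eig_mset A = mset (map complex_of_real d)"
    using Suc.IH[OF A(2,1)] by blast
  have eigH: "eig_mset H = add_mset (complex_of_real r) (eig_mset A)"
    using eig_mset_unitary_congruence[OF W Suc(3)] eig_mset_four_block_diag[OF A(1)] blk by simp
  have "r \<le> x" if "x \<in> set d" for x
    using r_min[of "complex_of_real x"] that eigH eigA by simp
  then have sorted: "sorted (r # d)" using d(2) by simp
  define B where "B = four_block_mat (1\<^sub>m 1) (0\<^sub>m 1 m) (0\<^sub>m m 1) U"
  have B: "B \<in> carrier_mat (Suc m) (Suc m)" "mat_adjoint B * B = 1\<^sub>m (Suc m)"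
    using U unitary_four_block_diag[OF U] by (auto simp: B_def)
  have "H * (W * B) = (W * B) * real_diag_mat (r # d)"
    using unitary_congruence_intertwine[OF W Suc(3) B(1)] four_block_diag_intertwine[OF A(1) U(1) d(1) AU]
      d(1) real_diag_mat_carrier[of "r # d"] by (simp add: blk B_def)
  moreover have "W * B \<in> carrier_mat (Suc m) (Suc m)" using W B by simp
  moreover have "mat_adjoint (W * B) * (W * B) = 1\<^sub>m (Suc m)" using unitary_mat_mult[OF W B] .
  ultimately show ?case
    using sorted d(1) eigH eigA by (intro exI[of _ "W * B"] exI[of _ "r # d"]) auto
qed

section \<open>Courant--Fischer bounds and interlacing\<close>

lemma lam_eq_nth:
  assumes "eig_mset H = mset (map complex_of_real d)" "sorted d"
  shows "lam H k = d ! (k - 1)"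
proof -
  have "image_mset Re (mset (map complex_of_real d)) = mset d" by (induction d) auto
  then show ?thesis using assms by (simp add: lam_def eig_list_def sorted_sort_id)
qed

lemma real_diag_mat_mult_vec:
  assumes "c \<in> carrier_vec (length d)"
  shows "real_diag_mat d *\<^sub>v c = vec (length d) (\<lambda>i. complex_of_real (d!i) * c$i)"
proof (rule eq_vecI)
  fix i assume "i < dim_vec (vec (length d) (\<lambda>i. complex_of_real (d!i) * c$i))"
  then have i: "i < length d" by simp
  have "(real_diag_mat d *\<^sub>v c) $ i = (\<Sum>j<length d. (if i = j then complex_of_real (d!i) else 0) * c$j)"
    using i assms by (auto simp: real_diag_mat_def mat_diag_def scalar_prod_def atLeast0LessThan
        intro!: sum.cong)
  also have "\<dots> = complex_of_real (d!i) * c$i"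
    using i by (simp add: if_distrib[of "\<lambda>x. x * _"] sum.delta cong: if_cong)
  finally show "(real_diag_mat d *\<^sub>v c) $ i = vec (length d) (\<lambda>i. complex_of_real (d!i) * c$i) $ i"
    using i by simp
qed simp

lemma quad_form_eigen_coords:
  assumes H: "H \<in> carrier_mat m m" and U: "U \<in> carrier_mat m m" "mat_adjoint U * U = 1\<^sub>m m"
    and d: "length d = m" "H * U = U * real_diag_mat d" and c: "c \<in> carrier_vec m"
  shows "Re (quad_form H (U *\<^sub>v c)) = (\<Sum>i<m. d!i * (cmod (c$i))^2)"
    and "Re (conjugate (U *\<^sub>v c) \<bullet> (U *\<^sub>v c)) = (\<Sum>i<m. (cmod (c$i))^2)"
proof -
  have D: "real_diag_mat d \<in> carrier_mat m m" using real_diag_mat_carrier[of d] d(1) by simp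
  have Uc: "U *\<^sub>v c \<in> carrier_vec m" using U c by simp
  have inv_c: "mat_adjoint U *\<^sub>v (U *\<^sub>v c) = c"
    using U c by (metis assoc_mult_mat_vec mat_adjoint_carrier one_mult_mat_vec)
  have "quad_form H (U *\<^sub>v c) = conjugate (U *\<^sub>v c) \<bullet> (U *\<^sub>v (real_diag_mat d *\<^sub>v c))"
    unfolding quad_form_def using d(2) H U c D by (metis assoc_mult_mat_vec)
  also have "\<dots> = conjugate c \<bullet> (real_diag_mat d *\<^sub>v c)"
    using scalar_prod_mat_adjoint[OF U(1) Uc, of "real_diag_mat d *\<^sub>v c"] inv_c D c by simp
  also have "\<dots> = (\<Sum>i<m. complex_of_real (d!i) * (cnj (c$i) * c$i))"
    using c d(1) by (simp add: real_diag_mat_mult_vec scalar_prod_def atLeast0LessThan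
        mult.commute mult.left_commute)
  finally show "Re (quad_form H (U *\<^sub>v c)) = (\<Sum>i<m. d!i * (cmod (c$i))^2)"
    unfolding Re_sum cmod_power2 by (simp add: power2_eq_square algebra_simps)
  have "conjugate (U *\<^sub>v c) \<bullet> (U *\<^sub>v c) = conjugate c \<bullet> c"
    using scalar_prod_mat_adjoint[OF U(1) Uc c] inv_c by simp
  also have "\<dots> = (\<Sum>i<m. cnj (c$i) * c$i)" using c by (simp add: scalar_prod_def atLeast0LessThan)
  finally show "Re (conjugate (U *\<^sub>v c) \<bullet> (U *\<^sub>v c)) = (\<Sum>i<m. (cmod (c$i))^2)"
    unfolding Re_sum cmod_power2 by (simp add: power2_eq_square)
qed

lemma sum_cmod_sq_pos:
  assumes "c \<in> carrier_vec n" "c \<noteq> 0\<^sub>v n"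
  shows "(\<Sum>i<n. (cmod (c$i))^2) > 0"
proof -
  obtain i where i: "i < n" "c $ i \<noteq> 0"
    using assms by (metis eq_vecI carrier_vecD index_zero_vec(1) index_zero_vec(2))
  have "(cmod (c$i))^2 \<le> (\<Sum>i<n. (cmod (c$i))^2)" by (rule member_le_sum) (use i in auto)
  moreover have "(cmod (c$i))^2 > 0" using i by simp
  ultimately show ?thesis by linarith
qed

lemma sorted_weighted_sum_ge:
  fixes d :: "real list"
  assumes "sorted d" "length d = m" "k \<le> m"
    and "\<forall>j<m. f j \<noteq> 0 \<longrightarrow> k - 1 \<le> j" "\<forall>j. f j \<ge> 0"
  shows "d!(k-1) * (\<Sum>i<m. f i) \<le> (\<Sum>i<m. d!i * f i)"
  unfolding sum_distrib_left
proof (rule sum_mono)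
  fix i assume i: "i \<in> {..<m}"
  show "d!(k-1) * f i \<le> d!i * f i"
  proof (cases "f i = 0")
    case False
    then have "d!(k-1) \<le> d!i" using assms i by (auto intro: sorted_nth_mono)
    then show ?thesis using assms(5) by (simp add: mult_right_mono)
  qed simp
qed

lemma sorted_weighted_sum_le:
  fixes d :: "real list"
  assumes "sorted d" "length d = m" "1 \<le> k" "k \<le> m"
    and "\<forall>j<m. f j \<noteq> 0 \<longrightarrow> j < k" "\<forall>j. f j \<ge> 0"
  shows "(\<Sum>i<m. d!i * f i) \<le> d!(k-1) * (\<Sum>i<m. f i)"
  unfolding sum_distrib_left
proof (rule sum_mono)
  fix i assume i: "i \<in> {..<m}"
  show "d!i * f i \<le> d!(k-1) * f i"
  proof (cases "f i = 0")
    case False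
    then have "i \<le> k - 1" using assms(5) i by auto
    then have "d!i \<le> d!(k-1)" using assms i by (auto intro: sorted_nth_mono)
    then show ?thesis using assms(6) by (simp add: mult_right_mono)
  qed simp
qed

lemma exists_nonzero_kernel_vec:
  fixes G :: "complex mat"
  assumes G: "G \<in> carrier_mat p q" and pq: "p < q"
  shows "\<exists>c \<in> carrier_vec q. c \<noteq> 0\<^sub>v q \<and> G *\<^sub>v c = 0\<^sub>v p"
proof -
  \<comment> \<open>pad \<open>G\<close> with zero rows to a square matrix whose last row vanishes\<close>
  define G' where "G' = mat\<^sub>r q q (\<lambda>i. if i = q - 1 then 0\<^sub>v q else if i < p then row G i else 0\<^sub>v q)"
  have G'c: "G' \<in> carrier_mat q q" by (simp add: G'_def)
  have "det G' = 0" unfolding G'_def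
    by (rule det_row_0) (use pq G in auto)
  then obtain v where v: "v \<in> carrier_vec q" "v \<noteq> 0\<^sub>v q" "G' *\<^sub>v v = 0\<^sub>v q"
    using det_0_iff_vec_prod_zero_field[OF G'c] by blast
  have "G *\<^sub>v v = 0\<^sub>v p"
  proof (rule eq_vecI)
    fix r assume "r < dim_vec (0\<^sub>v p)"
    then have r: "r < p" by simp
    have "(G' *\<^sub>v v) $ r = 0" using v(3) r pq by simp
    moreover have "(G' *\<^sub>v v) $ r = row G r \<bullet> v" using r pq G by (simp add: G'_def)
    ultimately show "(G *\<^sub>v v) $ r = 0\<^sub>v p $ r" using r G by simp
  qed (use G in simp)
  then show ?thesis using v by blast
qed


lemma exists_nonzero_kernel_vec_in_window:
  fixes G :: "complex mat"
  assumes G: "G \<in> carrier_mat p n" and pq: "p < q" and oq: "off + q \<le> n"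
  shows "\<exists>c \<in> carrier_vec n. c \<noteq> 0\<^sub>v n \<and> G *\<^sub>v c = 0\<^sub>v p \<and> (\<forall>i<n. c$i \<noteq> 0 \<longrightarrow> off \<le> i \<and> i < off + q)"
proof -
  define F where "F = mat p q (\<lambda>(r,s). G $$ (r, s + off))"
  have Fc: "F \<in> carrier_mat p q" by (simp add: F_def)
  obtain c' where c': "c' \<in> carrier_vec q" "c' \<noteq> 0\<^sub>v q" "F *\<^sub>v c' = 0\<^sub>v p"
    using exists_nonzero_kernel_vec[OF Fc pq] by blast
  define c where "c = vec n (\<lambda>i. if off \<le> i \<and> i < off + q then c' $ (i - off) else 0)"
  have cc: "c \<in> carrier_vec n" by (simp add: c_def)
  have supp: "\<forall>i<n. c$i \<noteq> 0 \<longrightarrow> off \<le> i \<and> i < off + q" by (auto simp: c_def)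
  have "c \<noteq> 0\<^sub>v n"
  proof
    assume c0: "c = 0\<^sub>v n"
    have "c' = 0\<^sub>v q"
    proof (rule eq_vecI)
      fix s assume "s < dim_vec (0\<^sub>v q)"
      then have s: "s < q" by simp
      have "c $ (s + off) = c' $ s" using s oq by (simp add: c_def)
      then show "c' $ s = 0\<^sub>v q $ s" using c0 s oq by simp
    qed (use c' in simp)
    then show False using c' by simp
  qed
  moreover have "G *\<^sub>v c = 0\<^sub>v p"
  proof (rule eq_vecI)
    fix r assume "r < dim_vec (0\<^sub>v p)"
    then have r: "r < p" by simp
    have "(G *\<^sub>v c) $ r = (\<Sum>i\<in>{0..<n}. G $$ (r,i) * c $ i)"
      using G r cc by (simp add: scalar_prod_def)
    also have "\<dots> = (\<Sum>i\<in>{off..<off+q}. G $$ (r,i) * c $ i)"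
      by (rule sum.mono_neutral_right) (use oq supp in auto)
    also have "\<dots> = (\<Sum>s\<in>{0..<q}. G $$ (r,s+off) * c $ (s+off))"
      using sum.shift_bounds_nat_ivl[of "\<lambda>i. G $$ (r,i) * c $ i" 0 off q] by (simp add: add.commute)
    also have "\<dots> = (F *\<^sub>v c') $ r"
      using r oq c'(1) Fc by (auto simp: F_def c_def scalar_prod_def intro!: sum.cong)
    finally show "(G *\<^sub>v c) $ r = 0\<^sub>v p $ r" using r c'(3) by simp
  qed (use G in simp)
  ultimately show ?thesis using cc supp by blast
qed

lemma lam_ge_if_quad_form_ge_on_kernel:
  assumes h: "hermitian_mat T" and Tc: "T \<in> carrier_mat n n" and k: "1 \<le> k" "k \<le> n"
    and G: "G \<in> carrier_mat (k-1) n"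
    and bound: "\<forall>u\<in>carrier_vec n. G *\<^sub>v u = 0\<^sub>v (k-1) \<longrightarrow> \<gamma> * Re (conjugate u \<bullet> u) \<le> Re (quad_form T u)"
  shows "\<gamma> \<le> lam T k"
proof -
  obtain U d where U: "U \<in> carrier_mat n n" "mat_adjoint U * U = 1\<^sub>m n"
    and d: "length d = n" "T * U = U * real_diag_mat d" and sd: "sorted d"
    and eig: "eig_mset T = mset (map complex_of_real d)"
    using hermitian_spectral_decomposition[OF h Tc] by blast
  have GU: "G * U \<in> carrier_mat (k-1) n" using G U by simp
  obtain c where c: "c \<in> carrier_vec n" "c \<noteq> 0\<^sub>v n" "(G * U) *\<^sub>v c = 0\<^sub>v (k-1)"
     "\<forall>i<n. c$i \<noteq> 0 \<longrightarrow> 0 \<le> i \<and> i < 0 + k"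
    using exists_nonzero_kernel_vec_in_window[OF GU, of k 0] k by auto
  have "G *\<^sub>v (U *\<^sub>v c) = 0\<^sub>v (k-1)" using c(3) assoc_mult_mat_vec[OF G U(1) c(1)] by simp
  then have "\<gamma> * Re (conjugate (U *\<^sub>v c) \<bullet> (U *\<^sub>v c)) \<le> Re (quad_form T (U *\<^sub>v c))"
    using bound U c by simp
  moreover have "(\<Sum>i<n. d!i * (cmod (c$i))^2) \<le> d!(k-1) * (\<Sum>i<n. (cmod (c$i))^2)"
    by (rule sorted_weighted_sum_le[OF sd d(1) k]) (use c(4) in auto)
  ultimately have "\<gamma> * (\<Sum>i<n. (cmod (c$i))^2) \<le> d!(k-1) * (\<Sum>i<n. (cmod (c$i))^2)"
    unfolding quad_form_eigen_coords[OF Tc U d c(1)] by linarith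
  then have "\<gamma> \<le> d!(k-1)" using sum_cmod_sq_pos[OF c(1,2)] by simp
  then show ?thesis using lam_eq_nth[OF eig sd] by simp
qed

lemma lam_le_if_quad_form_le_on_kernel:
  assumes h: "hermitian_mat T" and Tc: "T \<in> carrier_mat n n" and k: "1 \<le> k" "k \<le> n"
    and G: "G \<in> carrier_mat (n-k) n"
    and bound: "\<forall>u\<in>carrier_vec n. G *\<^sub>v u = 0\<^sub>v (n-k) \<longrightarrow> Re (quad_form T u) \<le> \<gamma> * Re (conjugate u \<bullet> u)"
  shows "lam T k \<le> \<gamma>"
proof -
  obtain U d where U: "U \<in> carrier_mat n n" "mat_adjoint U * U = 1\<^sub>m n"
    and d: "length d = n" "T * U = U * real_diag_mat d" and sd: "sorted d"
    and eig: "eig_mset T = mset (map complex_of_real d)"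
    using hermitian_spectral_decomposition[OF h Tc] by blast
  have GU: "G * U \<in> carrier_mat (n-k) n" using G U by simp
  obtain c where c: "c \<in> carrier_vec n" "c \<noteq> 0\<^sub>v n" "(G * U) *\<^sub>v c = 0\<^sub>v (n-k)"
     "\<forall>i<n. c$i \<noteq> 0 \<longrightarrow> k - 1 \<le> i \<and> i < k - 1 + (n - k + 1)"
    using exists_nonzero_kernel_vec_in_window[OF GU, of "n-k+1" "k-1"] k by auto
  have "G *\<^sub>v (U *\<^sub>v c) = 0\<^sub>v (n-k)" using c(3) assoc_mult_mat_vec[OF G U(1) c(1)] by simp
  then have "Re (quad_form T (U *\<^sub>v c)) \<le> \<gamma> * Re (conjugate (U *\<^sub>v c) \<bullet> (U *\<^sub>v c))"
    using bound U c by simp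
  moreover have "d!(k-1) * (\<Sum>i<n. (cmod (c$i))^2) \<le> (\<Sum>i<n. d!i * (cmod (c$i))^2)"
    by (rule sorted_weighted_sum_ge[OF sd d(1) k(2)]) (use c(4) in auto)
  ultimately have "d!(k-1) * (\<Sum>i<n. (cmod (c$i))^2) \<le> \<gamma> * (\<Sum>i<n. (cmod (c$i))^2)"
    unfolding quad_form_eigen_coords[OF Tc U d c(1)] by linarith
  then have "d!(k-1) \<le> \<gamma>" using sum_cmod_sq_pos[OF c(1,2)] by simp
  then show ?thesis using lam_eq_nth[OF eig sd] by simp
qed


lemma unitary_mult_vec_adjoint_mult_vec:
  fixes U :: "complex mat"
  assumes "U \<in> carrier_mat m m" "mat_adjoint U * U = 1\<^sub>m m" "x \<in> carrier_vec m"
  shows "U *\<^sub>v (mat_adjoint U *\<^sub>v x) = x"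
  using assoc_mult_mat_vec[OF assms(1) mat_adjoint_carrier[OF assms(1)] assms(3)]
    unitary_mat_right_inverse[OF assms(1,2)] assms(3) by simp

lemma mult_mat_vec_row_window:
  assumes "X \<in> carrier_mat N a" "u \<in> carrier_vec a" "r < p" "r + off < N"
  shows "(mat p a (\<lambda>(r,i). X $$ (r + off, i)) *\<^sub>v u) $ r = (X *\<^sub>v u) $ (r + off)"
  using assms by (simp add: scalar_prod_def row_def)

lemma exists_kernel_lam_le_quad_form:
  assumes h: "hermitian_mat H" and Hc: "H \<in> carrier_mat m m" and L: "L \<in> carrier_mat m a"
    and k: "1 \<le> k" "k \<le> m"
  shows "\<exists>G \<in> carrier_mat (k-1) a. \<forall>u \<in> carrier_vec a. G *\<^sub>v u = 0\<^sub>v (k-1) \<longrightarrow>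
     lam H k * Re (conjugate (L *\<^sub>v u) \<bullet> (L *\<^sub>v u)) \<le> Re (quad_form H (L *\<^sub>v u))"
proof -
  obtain U d where U: "U \<in> carrier_mat m m" "mat_adjoint U * U = 1\<^sub>m m"
    and d: "length d = m" "H * U = U * real_diag_mat d" and sd: "sorted d"
    and eig: "eig_mset H = mset (map complex_of_real d)"
    using hermitian_spectral_decomposition[OF h Hc] by blast
  define X where "X = mat_adjoint U * L"
  have Xc: "X \<in> carrier_mat m a" using mult_carrier_mat[OF mat_adjoint_carrier[OF U(1)] L] by (simp add: X_def)
  \<comment> \<open>on the kernel of \<open>G\<close>, \<open>L u\<close> has no component along the first \<open>k - 1\<close> eigenvectors\<close>
  define G where "G = mat (k-1) a (\<lambda>(r,i). X $$ (r + 0, i))"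
  have "lam H k * Re (conjugate (L *\<^sub>v u) \<bullet> (L *\<^sub>v u)) \<le> Re (quad_form H (L *\<^sub>v u))"
    if u: "u \<in> carrier_vec a" and G0: "G *\<^sub>v u = 0\<^sub>v (k-1)" for u
  proof -
    define c where "c = X *\<^sub>v u"
    have c: "c \<in> carrier_vec m" using Xc u by (simp add: c_def)
    have "c = mat_adjoint U *\<^sub>v (L *\<^sub>v u)"
      using assoc_mult_mat_vec[OF mat_adjoint_carrier[OF U(1)] L u] by (simp add: c_def X_def)
    then have Lu: "L *\<^sub>v u = U *\<^sub>v c"
      using unitary_mult_vec_adjoint_mult_vec[OF U] L u by simp
    have "c $ j = 0" if "j < k - 1" for j
    proof -
      have "(G *\<^sub>v u) $ j = (X *\<^sub>v u) $ (j + 0)"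
        unfolding G_def by (rule mult_mat_vec_row_window[OF Xc u that]) (use that k in simp)
      then show ?thesis using G0 that by (simp add: c_def)
    qed
    then have "d!(k-1) * (\<Sum>i<m. (cmod (c$i))^2) \<le> (\<Sum>i<m. d!i * (cmod (c$i))^2)"
      by (intro sorted_weighted_sum_ge[OF sd d(1) k(2)]) (auto simp: not_le[symmetric])
    then show ?thesis
      unfolding Lu quad_form_eigen_coords[OF Hc U d c] lam_eq_nth[OF eig sd] .
  qed
  moreover have "G \<in> carrier_mat (k-1) a" by (simp add: G_def)
  ultimately show ?thesis by blast
qed

lemma exists_kernel_quad_form_le_lam:
  assumes h: "hermitian_mat H" and Hc: "H \<in> carrier_mat m m" and L: "L \<in> carrier_mat m a"
    and k: "1 \<le> k" "k \<le> m"
  shows "\<exists>G \<in> carrier_mat (m-k) a. \<forall>u \<in> carrier_vec a. G *\<^sub>v u = 0\<^sub>v (m-k) \<longrightarrow>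
     Re (quad_form H (L *\<^sub>v u)) \<le> lam H k * Re (conjugate (L *\<^sub>v u) \<bullet> (L *\<^sub>v u))"
proof -
  obtain U d where U: "U \<in> carrier_mat m m" "mat_adjoint U * U = 1\<^sub>m m"
    and d: "length d = m" "H * U = U * real_diag_mat d" and sd: "sorted d"
    and eig: "eig_mset H = mset (map complex_of_real d)"
    using hermitian_spectral_decomposition[OF h Hc] by blast
  define X where "X = mat_adjoint U * L"
  have Xc: "X \<in> carrier_mat m a" using mult_carrier_mat[OF mat_adjoint_carrier[OF U(1)] L] by (simp add: X_def)
  define G where "G = mat (m-k) a (\<lambda>(r,i). X $$ (r + k, i))"
  have "Re (quad_form H (L *\<^sub>v u)) \<le> lam H k * Re (conjugate (L *\<^sub>v u) \<bullet> (L *\<^sub>v u))"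
    if u: "u \<in> carrier_vec a" and G0: "G *\<^sub>v u = 0\<^sub>v (m-k)" for u
  proof -
    define c where "c = X *\<^sub>v u"
    have c: "c \<in> carrier_vec m" using Xc u by (simp add: c_def)
    have "c = mat_adjoint U *\<^sub>v (L *\<^sub>v u)"
      using assoc_mult_mat_vec[OF mat_adjoint_carrier[OF U(1)] L u] by (simp add: c_def X_def)
    then have Lu: "L *\<^sub>v u = U *\<^sub>v c"
      using unitary_mult_vec_adjoint_mult_vec[OF U] L u by simp
    have "c $ (r + k) = 0" if "r < m - k" for r
    proof -
      have "(G *\<^sub>v u) $ r = (X *\<^sub>v u) $ (r + k)"
        unfolding G_def by (rule mult_mat_vec_row_window[OF Xc u that]) (use that in simp)
      then show ?thesis using G0 that by (simp add: c_def)
    qed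
    then have "c $ j = 0" if "j < m" "\<not> j < k" for j
      using that by (metis add.commute le_add_diff_inverse less_diff_conv not_less)
    then have "(\<Sum>i<m. d!i * (cmod (c$i))^2) \<le> d!(k-1) * (\<Sum>i<m. (cmod (c$i))^2)"
      by (intro sorted_weighted_sum_le[OF sd d(1) k]) auto
    then show ?thesis
      unfolding Lu quad_form_eigen_coords[OF Hc U d c] lam_eq_nth[OF eig sd] .
  qed
  moreover have "G \<in> carrier_mat (m-k) a" by (simp add: G_def)
  ultimately show ?thesis by blast
qed


lemma lam_lower_interlacing:
  assumes hH: "hermitian_mat H" and Hc: "H \<in> carrier_mat m m"
    and hT: "hermitian_mat T" and Tc: "T \<in> carrier_mat a a" and L: "L \<in> carrier_mat m a"
    and hL: "\<forall>u\<in>carrier_vec a. Re (quad_form T u) = Re (quad_form H (L *\<^sub>v u)) \<and>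
               Re (conjugate u \<bullet> u) \<le> Re (conjugate (L *\<^sub>v u) \<bullet> (L *\<^sub>v u))"
    and k: "1 \<le> k" "k \<le> a" "a \<le> m" and lam_nonneg: "lam H k \<ge> 0"
  shows "lam H k \<le> lam T k"
proof -
  obtain G where G: "G \<in> carrier_mat (k-1) a" and hG: "\<forall>u \<in> carrier_vec a. G *\<^sub>v u = 0\<^sub>v (k-1) \<longrightarrow>
     lam H k * Re (conjugate (L *\<^sub>v u) \<bullet> (L *\<^sub>v u)) \<le> Re (quad_form H (L *\<^sub>v u))"
    using exists_kernel_lam_le_quad_form[OF hH Hc L, of k] k by auto
  show ?thesis
  proof (rule lam_ge_if_quad_form_ge_on_kernel[OF hT Tc k(1,2) G], intro ballI impI)
    fix u :: "complex vec" assume u: "u \<in> carrier_vec a" and "G *\<^sub>v u = 0\<^sub>v (k-1)"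
    then have "lam H k * Re (conjugate (L *\<^sub>v u) \<bullet> (L *\<^sub>v u)) \<le> Re (quad_form H (L *\<^sub>v u))"
      using hG by blast
    moreover have "lam H k * Re (conjugate u \<bullet> u) \<le> lam H k * Re (conjugate (L *\<^sub>v u) \<bullet> (L *\<^sub>v u))"
      using hL u lam_nonneg by (simp add: mult_left_mono)
    ultimately show "lam H k * Re (conjugate u \<bullet> u) \<le> Re (quad_form T u)" using hL u by fastforce
  qed
qed

lemma lam_upper_interlacing:
  assumes hH: "hermitian_mat H" and Hc: "H \<in> carrier_mat (a+b) (a+b)"
    and hT: "hermitian_mat T" and Tc: "T \<in> carrier_mat a a" and E: "E \<in> carrier_mat (a+b) a"
    and hE: "\<forall>u\<in>carrier_vec a. Re (quad_form T u) \<le> Re (quad_form H (E *\<^sub>v u)) \<and>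
               Re (conjugate (E *\<^sub>v u) \<bullet> (E *\<^sub>v u)) = Re (conjugate u \<bullet> u)"
    and k: "1 \<le> k" "k \<le> a"
  shows "lam T k \<le> lam H (k + b)"
proof -
  obtain G where G: "G \<in> carrier_mat (a + b - (k + b)) a" and hG: "\<forall>u \<in> carrier_vec a.
     G *\<^sub>v u = 0\<^sub>v (a + b - (k + b)) \<longrightarrow>
     Re (quad_form H (E *\<^sub>v u)) \<le> lam H (k + b) * Re (conjugate (E *\<^sub>v u) \<bullet> (E *\<^sub>v u))"
    using exists_kernel_quad_form_le_lam[OF hH Hc E, of "k + b"] k by auto
  have G': "G \<in> carrier_mat (a - k) a" using G by simp
  show ?thesis
  proof (rule lam_le_if_quad_form_le_on_kernel[OF hT Tc k G'], intro ballI impI)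
    fix u :: "complex vec" assume u: "u \<in> carrier_vec a" and "G *\<^sub>v u = 0\<^sub>v (a - k)"
    then have "Re (quad_form H (E *\<^sub>v u)) \<le> lam H (k + b) * Re (conjugate (E *\<^sub>v u) \<bullet> (E *\<^sub>v u))"
      using hG by simp
    then show "Re (quad_form T u) \<le> lam H (k + b) * Re (conjugate u \<bullet> u)" using hE u by fastforce
  qed
qed

lemma pos_def_cmat_lam_pos:
  assumes p: "pos_def_cmat T" and Tc: "T \<in> carrier_mat n n" and k: "1 \<le> k" "k \<le> n"
  shows "lam T k > 0"
proof -
  have "hermitian_mat T" using p pos_def_cmat_def by blast
  then obtain U d where U: "U \<in> carrier_mat n n" "mat_adjoint U * U = 1\<^sub>m n"
    and d: "length d = n" "T * U = U * real_diag_mat d" and sd: "sorted d"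
    and eig: "eig_mset T = mset (map complex_of_real d)"
    using hermitian_spectral_decomposition[OF _ Tc] by blast
  define c where "c = (unit_vec n (k - 1) :: complex vec)"
  have c: "c \<in> carrier_vec n" by (simp add: c_def)
  have cmod_c: "(cmod (c$j))^2 = (if j = k - 1 then 1 else 0)" if "j < n" for j
    using that by (simp add: c_def unit_vec_def)
  note coords = quad_form_eigen_coords[OF Tc U d c]
  have "(\<Sum>j<n. (cmod (c$j))^2) = (\<Sum>j<n. if j = k - 1 then 1 else 0)"
    by (rule sum.cong) (simp_all add: cmod_c)
  then have "Re (conjugate (U *\<^sub>v c) \<bullet> (U *\<^sub>v c)) = 1"
    unfolding coords(2) using k by simp
  then have "U *\<^sub>v c \<noteq> 0\<^sub>v n" by auto
  then have "Re (quad_form T (U *\<^sub>v c)) > 0" using pos_def_cmatD[OF p Tc] U c by simp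
  moreover have "(\<Sum>j<n. d!j * (cmod (c$j))^2) = (\<Sum>j<n. if j = k - 1 then d!(k-1) else 0)"
    by (rule sum.cong) (simp_all add: cmod_c)
  then have "Re (quad_form T (U *\<^sub>v c)) = d!(k-1)"
    unfolding coords(1) using k by simp
  ultimately show ?thesis using lam_eq_nth[OF eig sd] by simp
qed


section \<open>Hermitian block matrices and the Schur complement\<close>

lemma split_block_four_block_mat:
  assumes "A \<in> carrier_mat n1 m1" "B \<in> carrier_mat n1 m2" "C \<in> carrier_mat n2 m1" "D \<in> carrier_mat n2 m2"
  shows "split_block (four_block_mat A B C D) n1 m1 = (A, B, C, D)"
  using assms unfolding split_block_def Let_def by (auto intro!: eq_matI)

lemma four_block_mat_eq_iff:
  assumes "A \<in> carrier_mat n1 m1" "B \<in> carrier_mat n1 m2" "C \<in> carrier_mat n2 m1" "D \<in> carrier_mat n2 m2"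
    and "A' \<in> carrier_mat n1 m1" "B' \<in> carrier_mat n1 m2" "C' \<in> carrier_mat n2 m1" "D' \<in> carrier_mat n2 m2"
  shows "four_block_mat A B C D = four_block_mat A' B' C' D' \<longleftrightarrow> A = A' \<and> B = B' \<and> C = C' \<and> D = D'"
proof
  assume "four_block_mat A B C D = four_block_mat A' B' C' D'"
  then have "split_block (four_block_mat A B C D) n1 m1 = split_block (four_block_mat A' B' C' D') n1 m1"
    by (rule arg_cong)
  then show "A = A' \<and> B = B' \<and> C = C' \<and> D = D'"
    unfolding split_block_four_block_mat[OF assms(1-4)] split_block_four_block_mat[OF assms(5-8)] by simp
qed simp

lemma hermitian_four_block_mat_iff:
  fixes M N N' P :: "complex mat"
  assumes "M \<in> carrier_mat n n" "N \<in> carrier_mat n m" "N' \<in> carrier_mat m n" "P \<in> carrier_mat m m"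
  shows "hermitian_mat (four_block_mat M N N' P) \<longleftrightarrow>
    hermitian_mat M \<and> hermitian_mat P \<and> N' = mat_adjoint N"
proof -
  have "hermitian_mat (four_block_mat M N N' P) \<longleftrightarrow>
      four_block_mat (mat_adjoint M) (mat_adjoint N') (mat_adjoint N) (mat_adjoint P) = four_block_mat M N N' P"
    using hermitian_mat_iff_adjoint[of _ "n + m"] mat_adjoint_four_block_mat[OF assms] assms by simp
  also have "\<dots> \<longleftrightarrow> mat_adjoint M = M \<and> mat_adjoint N' = N \<and> mat_adjoint N = N' \<and> mat_adjoint P = P"
    using assms by (intro four_block_mat_eq_iff) auto
  finally show ?thesis
    using hermitian_mat_iff_adjoint assms by auto
qed

lemma mult_mat_vec_zero[simp]: "A \<in> carrier_mat nr nc \<Longrightarrow> A *\<^sub>v 0\<^sub>v nc = (0\<^sub>v nr :: 'a :: semiring_0 vec)"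
  by (intro eq_vecI) auto

lemma zero_mat_mult_vec[simp]: "u \<in> carrier_vec nc \<Longrightarrow> 0\<^sub>m nr nc *\<^sub>v u = (0\<^sub>v nr :: 'a :: semiring_0 vec)"
  by (intro eq_vecI) auto

lemma mult_mat_vec_uminus:
  "A \<in> carrier_mat nr nc \<Longrightarrow> z \<in> carrier_vec nc \<Longrightarrow> A *\<^sub>v (- z) = - (A *\<^sub>v (z :: 'a :: ring vec))"
  by (intro eq_vecI) (auto simp: scalar_prod_uminus_right)

lemma append_vec_eq_zero_iff:
  assumes "u \<in> carrier_vec n" "y \<in> carrier_vec m"
  shows "u @\<^sub>v y = 0\<^sub>v (n + m) \<longleftrightarrow> u = 0\<^sub>v n \<and> y = (0\<^sub>v m :: 'a :: zero vec)"
proof -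
  have "0\<^sub>v (n + m) = (0\<^sub>v n @\<^sub>v 0\<^sub>v m :: 'a vec)" by (intro eq_vecI) auto
  then show ?thesis using append_vec_eq[OF assms(1) zero_carrier_vec] by simp
qed

lemma conjugate_append_vec:
  "conjugate (u @\<^sub>v v) = conjugate u @\<^sub>v conjugate (v :: complex vec)"
  by (intro eq_vecI) auto

lemma quad_form_four_block_mat:
  fixes M N N' P :: "complex mat"
  assumes c: "M \<in> carrier_mat n n" "N \<in> carrier_mat n m" "N' \<in> carrier_mat m n" "P \<in> carrier_mat m m"
    and u: "u \<in> carrier_vec n" and y: "y \<in> carrier_vec m"
  shows "quad_form (four_block_mat M N N' P) (u @\<^sub>v y) =
    quad_form M u + conjugate u \<bullet> (N *\<^sub>v y) + conjugate y \<bullet> (N' *\<^sub>v u) + quad_form P y"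
proof -
  have "quad_form (four_block_mat M N N' P) (u @\<^sub>v y)
      = conjugate u \<bullet> (M *\<^sub>v u + N *\<^sub>v y) + conjugate y \<bullet> (N' *\<^sub>v u + P *\<^sub>v y)"
    unfolding quad_form_def four_block_mat_mult_vec[OF c u y] conjugate_append_vec
    by (rule scalar_prod_append[of _ n _ m]) (use c u y in auto)
  then show ?thesis
    using c u y by (simp add: quad_form_def scalar_prod_add_distrib[of _ n] scalar_prod_add_distrib[of _ m])
qed

lemma pos_def_cmat_diag_blocks:
  fixes M N N' P :: "complex mat"
  assumes pH: "pos_def_cmat (four_block_mat M N N' P)"
    and c: "M \<in> carrier_mat n n" "N \<in> carrier_mat n m" "N' \<in> carrier_mat m n" "P \<in> carrier_mat m m"
  shows "pos_def_cmat M" "pos_def_cmat P"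
proof -
  have Hc: "four_block_mat M N N' P \<in> carrier_mat (n + m) (n + m)" using c by simp
  have herm: "hermitian_mat M" "hermitian_mat P"
    using pH hermitian_four_block_mat_iff[OF c] unfolding pos_def_cmat_def by auto
  have "Re (quad_form M u) > 0" if u: "u \<in> carrier_vec n" "u \<noteq> 0\<^sub>v n" for u
  proof -
    have "u @\<^sub>v 0\<^sub>v m \<noteq> 0\<^sub>v (n + m)" using append_vec_eq_zero_iff[OF u(1) zero_carrier_vec] u(2) by simp
    then have "Re (quad_form (four_block_mat M N N' P) (u @\<^sub>v 0\<^sub>v m)) > 0"
      using pos_def_cmatD[OF pH Hc] u(1) by simp
    then show ?thesis
      using quad_form_four_block_mat[OF c u(1) zero_carrier_vec] c u(1) by (simp add: quad_form_def)
  qed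
  then show "pos_def_cmat M" using pos_def_cmat_iff_quad_form[OF c(1)] herm by blast
  have "Re (quad_form P y) > 0" if y: "y \<in> carrier_vec m" "y \<noteq> 0\<^sub>v m" for y
  proof -
    have "0\<^sub>v n @\<^sub>v y \<noteq> 0\<^sub>v (n + m)" using append_vec_eq_zero_iff[OF zero_carrier_vec y(1)] y(2) by simp
    then have "Re (quad_form (four_block_mat M N N' P) (0\<^sub>v n @\<^sub>v y)) > 0"
      using pos_def_cmatD[OF pH Hc] y(1) by simp
    then show ?thesis
      using quad_form_four_block_mat[OF c zero_carrier_vec y(1)] c y(1) by (simp add: quad_form_def)
  qed
  then show "pos_def_cmat P" using pos_def_cmat_iff_quad_form[OF c(4)] herm by blast
qed


lemma Re_conjugate_scalar_prod_append:
  assumes "u \<in> carrier_vec n" "y \<in> carrier_vec m"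
  shows "Re (conjugate (u @\<^sub>v y) \<bullet> (u @\<^sub>v y)) = Re (conjugate u \<bullet> u) + Re (conjugate y \<bullet> (y :: complex vec))"
  unfolding conjugate_append_vec using assms by (subst scalar_prod_append) auto

context
  fixes M N N' P Q :: "complex mat" and n m :: nat
  assumes M: "M \<in> carrier_mat n n" and N: "N \<in> carrier_mat n m" and N': "N' \<in> carrier_mat m n"
    and P: "P \<in> carrier_mat m m" and Q: "Q \<in> carrier_mat m m"
    and pos_def: "pos_def_cmat (four_block_mat M N N' P)" and PQ: "P * Q = 1\<^sub>m m"
begin

lemma schur_complement_carrier: "M - N * Q * N' \<in> carrier_mat n n"
  using M N Q N' by auto

lemma schur_complement_mult_vec:
  assumes u: "u \<in> carrier_vec n"
  shows "(M - N * Q * N') *\<^sub>v u = M *\<^sub>v u - N *\<^sub>v (Q *\<^sub>v (N' *\<^sub>v u))"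
proof -
  have NQ: "N * Q \<in> carrier_mat n m" using N Q by simp
  have "(N * Q * N') *\<^sub>v u = N *\<^sub>v (Q *\<^sub>v (N' *\<^sub>v u))"
    using assoc_mult_mat_vec[OF NQ N' u] assoc_mult_mat_vec[OF N Q, of "N' *\<^sub>v u"] N' u by simp
  then show ?thesis
    using minus_mult_distrib_mat_vec[OF M mult_carrier_mat[OF NQ N'] u] by simp
qed

lemma quad_form_schur_complement:
  assumes u: "u \<in> carrier_vec n"
  shows "quad_form (M - N * Q * N') u = quad_form (four_block_mat M N N' P) (u @\<^sub>v - (Q *\<^sub>v (N' *\<^sub>v u)))"
proof -
  define z where "z = Q *\<^sub>v (N' *\<^sub>v u)"
  have z: "z \<in> carrier_vec m" using Q N' u by (simp add: z_def)
  have Pz: "P *\<^sub>v z = N' *\<^sub>v u"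
    using PQ P Q N' u by (simp add: z_def assoc_mult_mat_vec[OF P Q, symmetric])
  have "quad_form (four_block_mat M N N' P) (u @\<^sub>v - z)
      = quad_form M u + conjugate u \<bullet> (N *\<^sub>v (- z)) + (conjugate (- z) \<bullet> (N' *\<^sub>v u) + quad_form P (- z))"
    using quad_form_four_block_mat[OF M N N' P u] z by (simp add: add.assoc)
  also have "conjugate (- z) \<bullet> (N' *\<^sub>v u) + quad_form P (- z) = 0"
    using Pz P N' u z by (simp add: quad_form_def mult_mat_vec_uminus)
  finally show ?thesis
    using schur_complement_mult_vec[OF u] M N u z
    by (simp add: quad_form_def z_def[symmetric] scalar_prod_minus_distrib[of _ n] mult_mat_vec_uminus)
qed

lemma schur_blocks_hermitian: "hermitian_mat M" "hermitian_mat P" "N' = mat_adjoint N"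
  using pos_def hermitian_four_block_mat_iff[OF M N N' P] unfolding pos_def_cmat_def by auto

lemma schur_inverse_adjoint: "mat_adjoint Q = Q"
proof -
  have QP: "Q * P = 1\<^sub>m m" using mat_mult_left_right_inverse[OF P Q PQ] .
  have aP: "mat_adjoint P = P" using schur_blocks_hermitian(2) hermitian_mat_iff_adjoint[OF P] by simp
  have "P * mat_adjoint Q = 1\<^sub>m m"
    using arg_cong[OF QP, of mat_adjoint] mat_adjoint_mult[OF Q P] aP by simp
  then have "Q * (P * mat_adjoint Q) = Q" using Q by simp
  then show ?thesis using QP Q P assoc_mult_mat[OF Q P mat_adjoint_carrier[OF Q], symmetric] by simp
qed

lemma hermitian_schur_complement: "hermitian_mat (M - N * Q * N')"
proof -
  have NQ: "N * Q \<in> carrier_mat n m" using N Q by simp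
  have "mat_adjoint (N * Q * N') = mat_adjoint N' * (mat_adjoint Q * mat_adjoint N)"
    using mat_adjoint_mult[OF NQ N'] mat_adjoint_mult[OF N Q] by simp
  also have "\<dots> = N * Q * N'"
    using schur_inverse_adjoint schur_blocks_hermitian(3) N Q by (simp add: assoc_mult_mat[OF N Q mat_adjoint_carrier[OF N]])
  finally show ?thesis
    using mat_adjoint_minus[OF M mult_carrier_mat[OF NQ N']] schur_blocks_hermitian(1)
      hermitian_mat_iff_adjoint[OF M] hermitian_mat_iff_adjoint[OF schur_complement_carrier] by simp
qed

lemma quad_form_schur_complement_le:
  assumes u: "u \<in> carrier_vec n"
  shows "Re (quad_form (M - N * Q * N') u) \<le> Re (quad_form M u)"
proof -
  define z where "z = Q *\<^sub>v (N' *\<^sub>v u)"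
  have z: "z \<in> carrier_vec m" using Q N' u by (simp add: z_def)
  have Pz: "P *\<^sub>v z = mat_adjoint N *\<^sub>v u"
    using PQ P Q N' u schur_blocks_hermitian(3)
    by (simp add: z_def assoc_mult_mat_vec[OF P Q, symmetric])
  have "quad_form (M - N * Q * N') u = quad_form M u - conjugate u \<bullet> (N *\<^sub>v z)"
    using schur_complement_mult_vec[OF u] M N u z
    by (simp add: quad_form_def z_def[symmetric] scalar_prod_minus_distrib[of _ n])
  also have "conjugate u \<bullet> (N *\<^sub>v z) = quad_form P z"
    using scalar_prod_mat_adjoint[OF N u z] scalar_prod_mat_adjoint[OF P z z] Pz
      schur_blocks_hermitian(2) hermitian_mat_iff_adjoint[OF P] by (simp add: quad_form_def)
  finally show ?thesis
    using pos_def_cmat_quad_form_nonneg[OF pos_def_cmat_diag_blocks(2)[OF pos_def M N N' P] P z] by simp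
qed

lemma pos_def_schur_complement: "pos_def_cmat (M - N * Q * N')"
proof -
  have "Re (quad_form (M - N * Q * N') u) > 0" if u: "u \<in> carrier_vec n" "u \<noteq> 0\<^sub>v n" for u
  proof -
    have z: "- (Q *\<^sub>v (N' *\<^sub>v u)) \<in> carrier_vec m" using Q N' u by simp
    then have "u @\<^sub>v - (Q *\<^sub>v (N' *\<^sub>v u)) \<noteq> 0\<^sub>v (n + m)"
      using append_vec_eq_zero_iff[OF u(1) z] u(2) by simp
    then show ?thesis
      using pos_def_cmatD[OF pos_def _ append_carrier_vec[OF u(1) z]] M P
        quad_form_schur_complement[OF u(1)] by simp
  qed
  then show ?thesis
    using pos_def_cmat_iff_quad_form[OF schur_complement_carrier] hermitian_schur_complement by blast
qed

lemma lam_interlacing_upper_left_block: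
  assumes k: "1 \<le> k" "k \<le> n"
  shows "lam (four_block_mat M N N' P) k \<le> lam M k \<and> lam M k \<le> lam (four_block_mat M N N' P) (k + m)"
proof -
  define E :: "complex mat" where "E = 1\<^sub>m n @\<^sub>r 0\<^sub>m m n"
  have E: "E \<in> carrier_mat (n + m) n" by (simp add: E_def)
  have Eu: "E *\<^sub>v u = u @\<^sub>v 0\<^sub>v m" if "u \<in> carrier_vec n" for u
    using mat_mult_append[OF one_carrier_mat zero_carrier_mat that] that by (simp add: E_def)
  have "Re (quad_form M u) = Re (quad_form (four_block_mat M N N' P) (E *\<^sub>v u)) \<and>
      Re (conjugate (E *\<^sub>v u) \<bullet> (E *\<^sub>v u)) = Re (conjugate u \<bullet> u)" if u: "u \<in> carrier_vec n" for u
    using quad_form_four_block_mat[OF M N N' P u zero_carrier_vec] Re_conjugate_scalar_prod_append[OF u zero_carrier_vec]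
      M N N' P u by (simp add: Eu quad_form_def)
  moreover have H: "four_block_mat M N N' P \<in> carrier_mat (n + m) (n + m)" using M P by simp
  moreover have "lam (four_block_mat M N N' P) k \<ge> 0"
    using pos_def_cmat_lam_pos[OF pos_def H, of k] k by simp
  ultimately show ?thesis
    using lam_lower_interlacing[OF _ H schur_blocks_hermitian(1) M E, of k]
      lam_upper_interlacing[OF _ H schur_blocks_hermitian(1) M E _ k] pos_def k
    unfolding pos_def_cmat_def by auto
qed

lemma lam_interlacing_schur_complement:
  assumes k: "1 \<le> k" "k \<le> n"
  shows "lam (four_block_mat M N N' P) k \<le> lam (M - N * Q * N') k \<and>
    lam (M - N * Q * N') k \<le> lam (four_block_mat M N N' P) (k + m)"
proof -
  define E :: "complex mat" where "E = 1\<^sub>m n @\<^sub>r 0\<^sub>m m n"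
  define L where "L = 1\<^sub>m n @\<^sub>r (- (Q * N'))"
  have E: "E \<in> carrier_mat (n + m) n" by (simp add: E_def)
  have L: "L \<in> carrier_mat (n + m) n" using Q N' by (simp add: L_def)
  have Eu: "E *\<^sub>v u = u @\<^sub>v 0\<^sub>v m" if "u \<in> carrier_vec n" for u
    using mat_mult_append[OF one_carrier_mat zero_carrier_mat that] that by (simp add: E_def)
  have Lu: "L *\<^sub>v u = u @\<^sub>v - (Q *\<^sub>v (N' *\<^sub>v u))" if "u \<in> carrier_vec n" for u
    using mat_mult_append[OF one_carrier_mat _ that, of "- (Q * N')" m] Q N' that
    by (simp add: L_def assoc_mult_mat_vec[OF Q N' that])
  have H: "four_block_mat M N N' P \<in> carrier_mat (n + m) (n + m)" using M P by simp
  have hH: "hermitian_mat (four_block_mat M N N' P)" using pos_def unfolding pos_def_cmat_def by simp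
  have "Re (quad_form (M - N * Q * N') u) \<le> Re (quad_form (four_block_mat M N N' P) (E *\<^sub>v u)) \<and>
      Re (conjugate (E *\<^sub>v u) \<bullet> (E *\<^sub>v u)) = Re (conjugate u \<bullet> u)" if u: "u \<in> carrier_vec n" for u
    using quad_form_four_block_mat[OF M N N' P u zero_carrier_vec] Re_conjugate_scalar_prod_append[OF u zero_carrier_vec]
      quad_form_schur_complement_le[OF u] M N N' P u by (simp add: Eu quad_form_def)
  then have upper: "lam (M - N * Q * N') k \<le> lam (four_block_mat M N N' P) (k + m)"
    using lam_upper_interlacing[OF hH H hermitian_schur_complement schur_complement_carrier E _ k] by blast
  have "Re (quad_form (M - N * Q * N') u) = Re (quad_form (four_block_mat M N N' P) (L *\<^sub>v u)) \<and>
      Re (conjugate u \<bullet> u) \<le> Re (conjugate (L *\<^sub>v u) \<bullet> (L *\<^sub>v u))" if u: "u \<in> carrier_vec n" for u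
  proof -
    have z: "- (Q *\<^sub>v (N' *\<^sub>v u)) \<in> carrier_vec m" using Q N' u by simp
    show ?thesis
      using quad_form_schur_complement[OF u] Re_conjugate_scalar_prod_append[OF u z]
        Re_conjugate_scalar_prod_self_nonneg[of "- (Q *\<^sub>v (N' *\<^sub>v u))"] by (simp add: Lu[OF u])
  qed
  moreover have "lam (four_block_mat M N N' P) k \<ge> 0"
    using pos_def_cmat_lam_pos[OF pos_def H, of k] k by simp
  ultimately have "lam (four_block_mat M N N' P) k \<le> lam (M - N * Q * N') k"
    using lam_lower_interlacing[OF hH H hermitian_schur_complement schur_complement_carrier L] k by auto
  then show ?thesis using upper by simp
qed

end


section \<open>The complex form of a real symmetric block matrix\<close>

lemma cmat_carrier[simp]: "X \<in> carrier_mat a b \<Longrightarrow> cmat X \<in> carrier_mat a b"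
  by (simp add: cmat_def)

lemma cconj_mat_carrier[simp]: "X \<in> carrier_mat a b \<Longrightarrow> cconj_mat X \<in> carrier_mat a b"
  by (simp add: cconj_mat_def)

lemma Re_quad_form_cmat:
  assumes A: "A \<in> carrier_mat m m" and z: "z \<in> carrier_vec m"
  defines "x \<equiv> vec m (\<lambda>i. Re (z $ i))" and "y \<equiv> vec m (\<lambda>i. Im (z $ i))"
  shows "Re (quad_form (cmat A) z) = x \<bullet> (A *\<^sub>v x) + y \<bullet> (A *\<^sub>v y)"
proof -
  have form: "w \<bullet> (A *\<^sub>v w) = (\<Sum>i<m. \<Sum>j<m. A $$ (i,j) * (w$i * w$j))" if "w \<in> carrier_vec m" for w
    using that A by (auto simp: scalar_prod_def sum_distrib_left atLeast0LessThan algebra_simps intro!: sum.cong)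
  have xc: "x \<in> carrier_vec m" and yc: "y \<in> carrier_vec m" by (simp_all add: x_def y_def)
  have "Re (quad_form (cmat A) z) = (\<Sum>i<m. \<Sum>j<m. Re (cnj (z$i) * complex_of_real (A $$ (i,j)) * z$j))"
    unfolding quad_form_def scalar_prod_mat_vec_double_sum[OF cmat_carrier[OF A] z z] Re_sum
    using A by (intro sum.cong refl) (auto simp: cmat_def)
  also have "\<dots> = (\<Sum>i<m. \<Sum>j<m. A $$ (i,j) * (Re (z$i) * Re (z$j) + Im (z$i) * Im (z$j)))"
    by (simp add: algebra_simps)
  also have "\<dots> = x \<bullet> (A *\<^sub>v x) + y \<bullet> (A *\<^sub>v y)"
    unfolding form[OF xc] form[OF yc] by (simp add: x_def y_def algebra_simps sum.distrib)
  finally show ?thesis .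
qed

lemma complex_vec_eq_zero_if_Re_Im:
  assumes z: "z \<in> carrier_vec m"
    and "vec m (\<lambda>i. Re (z $ i)) = 0\<^sub>v m" "vec m (\<lambda>i. Im (z $ i)) = 0\<^sub>v m"
  shows "z = 0\<^sub>v m"
proof (rule eq_vecI)
  fix i assume "i < dim_vec (0\<^sub>v m :: complex vec)"
  then have i: "i < m" by simp
  have "Re (z$i) = 0" "Im (z$i) = 0"
    using arg_cong[OF assms(2), of "\<lambda>v. v $ i"] arg_cong[OF assms(3), of "\<lambda>v. v $ i"] i by simp_all
  then show "z $ i = 0\<^sub>v m $ i" using i by (simp add: complex_eq_iff)
qed (use z in simp)

lemma hermitian_cmat:
  assumes A: "A \<in> carrier_mat m m" and sym: "transpose_mat A = A"
  shows "hermitian_mat (cmat A)"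
  unfolding hermitian_mat_def
proof (intro conjI allI impI)
  fix i j assume "i < dim_row (cmat A)" "j < dim_row (cmat A)"
  then have ij: "i < m" "j < m" using A by (simp_all add: cmat_def)
  have "transpose_mat A $$ (j, i) = A $$ (j, i)" using sym by simp
  then have "A $$ (i, j) = A $$ (j, i)" using ij A by simp
  then show "cmat A $$ (i, j) = cnj (cmat A $$ (j, i))" using ij A by (simp add: cmat_def)
qed (use A in \<open>simp add: cmat_def\<close>)

lemma pos_def_cmat_cmat:
  assumes pA: "pos_def_rmat A" and A: "A \<in> carrier_mat m m"
  shows "pos_def_cmat (cmat A)"
proof -
  have pd: "w \<bullet> (A *\<^sub>v w) > 0" if "w \<in> carrier_vec m" "w \<noteq> 0\<^sub>v m" for w
    using pA A that unfolding pos_def_rmat_def by auto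
  have nn: "w \<bullet> (A *\<^sub>v w) \<ge> 0" if "w \<in> carrier_vec m" for w
    using pd[OF that] A by (cases "w = 0\<^sub>v m") auto
  have "Re (quad_form (cmat A) z) > 0" if z: "z \<in> carrier_vec m" "z \<noteq> 0\<^sub>v m" for z
  proof -
    define x where "x = vec m (\<lambda>i. Re (z $ i))"
    define y where "y = vec m (\<lambda>i. Im (z $ i))"
    have "x \<noteq> 0\<^sub>v m \<or> y \<noteq> 0\<^sub>v m"
      using complex_vec_eq_zero_if_Re_Im[OF z(1)] z(2) by (auto simp: x_def y_def)
    moreover have xc: "x \<in> carrier_vec m" and yc: "y \<in> carrier_vec m" by (simp_all add: x_def y_def)
    ultimately have "x \<bullet> (A *\<^sub>v x) + y \<bullet> (A *\<^sub>v y) > 0"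
      using pd[OF xc] pd[OF yc] nn[OF xc] nn[OF yc] by (metis add_nonneg_pos add_pos_nonneg)
    then show ?thesis using Re_quad_form_cmat[OF A z(1)] unfolding x_def y_def by simp
  qed
  moreover have "hermitian_mat (cmat A)"
    using hermitian_cmat[OF A] pA unfolding pos_def_rmat_def by simp
  ultimately show ?thesis using pos_def_cmat_iff_quad_form[OF cmat_carrier[OF A]] by blast
qed

lemma smult_smult_mat: "a \<cdot>\<^sub>m (b \<cdot>\<^sub>m X) = (a * b) \<cdot>\<^sub>m (X :: 'a :: semigroup_mult mat)"
  by (intro eq_matI) (auto simp: mult.assoc)

lemma smult_congruence:
  fixes X Y Z :: "'a :: comm_semiring_0 mat"
  assumes "X \<in> carrier_mat n n" "Y \<in> carrier_mat n n" "Z \<in> carrier_mat n n"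
  shows "(a \<cdot>\<^sub>m X) * Y * (b \<cdot>\<^sub>m Z) = (a * b) \<cdot>\<^sub>m (X * Y * Z)"
  using assms by (simp add: mult_smult_assoc_mat[of _ n n] mult_smult_distrib[of _ n n] smult_smult_mat
      mult.commute)

(* The adjoint sends real coordinates (x, y) to (z, conj z) with z = (x + i y) / sqrt 2. *)
definition complex_coordinates_mat :: "nat \<Rightarrow> complex mat" where
  "complex_coordinates_mat n = complex_of_real (1 / sqrt 2) \<cdot>\<^sub>m
     four_block_mat (1\<^sub>m n) (1\<^sub>m n) ((- \<i>) \<cdot>\<^sub>m 1\<^sub>m n) (\<i> \<cdot>\<^sub>m 1\<^sub>m n)"

lemma complex_coordinates_mat_carrier:
  "complex_coordinates_mat n \<in> carrier_mat (n + n) (n + n)"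
  by (simp add: complex_coordinates_mat_def)

lemma complex_coordinates_congruence_half:
  fixes X :: "complex mat"
  assumes "X \<in> carrier_mat (n + n) (n + n)"
  shows "mat_adjoint (complex_coordinates_mat n) * X * complex_coordinates_mat n
    = four_block_mat ((1/2) \<cdot>\<^sub>m 1\<^sub>m n) ((\<i>/2) \<cdot>\<^sub>m 1\<^sub>m n) ((1/2) \<cdot>\<^sub>m 1\<^sub>m n) ((-\<i>/2) \<cdot>\<^sub>m 1\<^sub>m n)
      * X * four_block_mat (1\<^sub>m n) (1\<^sub>m n) ((- \<i>) \<cdot>\<^sub>m 1\<^sub>m n) (\<i> \<cdot>\<^sub>m 1\<^sub>m n)"
proof -
  define c where "c = complex_of_real (1 / sqrt 2)"
  define P where "P = four_block_mat (1\<^sub>m n) (1\<^sub>m n) ((- \<i>) \<cdot>\<^sub>m 1\<^sub>m n) (\<i> \<cdot>\<^sub>m (1\<^sub>m n :: complex mat))"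
  have P: "P \<in> carrier_mat (n + n) (n + n)" by (simp add: P_def)
  have cc: "cnj c * c = 1/2"
    by (simp add: c_def flip: of_real_mult)
  have "mat_adjoint (c \<cdot>\<^sub>m P) * X * (c \<cdot>\<^sub>m P) = (1/2) \<cdot>\<^sub>m (mat_adjoint P * X * P)"
    unfolding mat_adjoint_smult by (simp only: smult_congruence[OF mat_adjoint_carrier[OF P] assms P] cc)
  also have "\<dots> = ((1/2) \<cdot>\<^sub>m mat_adjoint P) * X * P"
    using mult_smult_assoc_mat[OF mat_adjoint_carrier[OF P] assms]
      mult_smult_assoc_mat[OF mult_carrier_mat[OF mat_adjoint_carrier[OF P] assms] P] by simp
  also have "(1/2) \<cdot>\<^sub>m mat_adjoint P
      = four_block_mat ((1/2) \<cdot>\<^sub>m 1\<^sub>m n) ((\<i>/2) \<cdot>\<^sub>m 1\<^sub>m n) ((1/2) \<cdot>\<^sub>m 1\<^sub>m n) ((-\<i>/2) \<cdot>\<^sub>m 1\<^sub>m n)"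
    unfolding P_def by (intro eq_matI) auto
  finally show ?thesis by (simp add: complex_coordinates_mat_def c_def P_def)
qed


lemma smult_one_mat_mult: "X \<in> carrier_mat n n \<Longrightarrow> (a \<cdot>\<^sub>m 1\<^sub>m n) * X = a \<cdot>\<^sub>m (X :: 'a :: comm_ring_1 mat)"
  using mult_smult_assoc_mat[OF one_carrier_mat, of X n n a] by simp

lemma mult_smult_one_mat: "X \<in> carrier_mat n n \<Longrightarrow> X * (a \<cdot>\<^sub>m 1\<^sub>m n) = a \<cdot>\<^sub>m (X :: 'a :: comm_ring_1 mat)"
  using mult_smult_distrib[of X n n "1\<^sub>m n" n a] by simp

lemma complex_coordinates_mat_unitary:
  "mat_adjoint (complex_coordinates_mat n) * complex_coordinates_mat n = 1\<^sub>m (n + n)"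
proof -
  have I: "1\<^sub>m n \<in> carrier_mat n n" "\<And>a. a \<cdot>\<^sub>m (1\<^sub>m n :: complex mat) \<in> carrier_mat n n" by auto
  have "mat_adjoint (complex_coordinates_mat n) * complex_coordinates_mat n
      = mat_adjoint (complex_coordinates_mat n) * 1\<^sub>m (n + n) * complex_coordinates_mat n"
    using complex_coordinates_mat_carrier[of n] by simp
  also have "\<dots> = 1\<^sub>m (n + n)"
    unfolding complex_coordinates_congruence_half[OF one_carrier_mat] right_mult_one_mat[OF four_block_carrier_mat[OF I(2) I(2)]]
    apply (subst mult_four_block_mat[OF I(2) I(2) I(2) I(2) I(1) I(1) I(2) I(2)])
    by (subst four_block_one_mat[symmetric], intro cong_four_block_mat; intro eq_matI; simp add: smult_one_mat_mult)
  finally show ?thesis .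
qed

lemma complex_coordinates_congruence:
  fixes B C T D :: "complex mat"
  assumes c: "B \<in> carrier_mat n n" "C \<in> carrier_mat n n" "T \<in> carrier_mat n n" "D \<in> carrier_mat n n"
  shows "mat_adjoint (complex_coordinates_mat n) * four_block_mat B C T D * complex_coordinates_mat n
    = four_block_mat ((1/2) \<cdot>\<^sub>m (B + D - \<i> \<cdot>\<^sub>m (C - T))) ((1/2) \<cdot>\<^sub>m (B - D + \<i> \<cdot>\<^sub>m (C + T)))
       ((1/2) \<cdot>\<^sub>m (B - D - \<i> \<cdot>\<^sub>m (C + T))) ((1/2) \<cdot>\<^sub>m (B + D + \<i> \<cdot>\<^sub>m (C - T)))"
proof -
  have I: "1\<^sub>m n \<in> carrier_mat n n" "\<And>a. a \<cdot>\<^sub>m (1\<^sub>m n :: complex mat) \<in> carrier_mat n n" by auto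
  define Q where "Q = four_block_mat ((1/2) \<cdot>\<^sub>m 1\<^sub>m n) ((\<i>/2) \<cdot>\<^sub>m 1\<^sub>m n) ((1/2) \<cdot>\<^sub>m 1\<^sub>m n) ((-\<i>/2) \<cdot>\<^sub>m (1\<^sub>m n :: complex mat))"
  have KP: "four_block_mat B C T D * four_block_mat (1\<^sub>m n) (1\<^sub>m n) ((- \<i>) \<cdot>\<^sub>m 1\<^sub>m n) (\<i> \<cdot>\<^sub>m 1\<^sub>m n)
      = four_block_mat (B - \<i> \<cdot>\<^sub>m C) (B + \<i> \<cdot>\<^sub>m C) (T - \<i> \<cdot>\<^sub>m D) (T + \<i> \<cdot>\<^sub>m D)"
    apply (subst mult_four_block_mat[OF c I(1) I(1) I(2) I(2)])
    by (intro cong_four_block_mat; intro eq_matI; use c in \<open>simp add: mult_smult_one_mat\<close>)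
  have c2: "B - \<i> \<cdot>\<^sub>m C \<in> carrier_mat n n" "B + \<i> \<cdot>\<^sub>m C \<in> carrier_mat n n"
     "T - \<i> \<cdot>\<^sub>m D \<in> carrier_mat n n" "T + \<i> \<cdot>\<^sub>m D \<in> carrier_mat n n" using c by auto
  have K: "four_block_mat B C T D \<in> carrier_mat (n + n) (n + n)" using c by simp
  have Q: "Q \<in> carrier_mat (n + n) (n + n)" by (simp add: Q_def)
  show ?thesis
    unfolding complex_coordinates_congruence_half[OF K] Q_def[symmetric]
      assoc_mult_mat[OF Q K four_block_carrier_mat[OF I(1) I(2)]] KP unfolding Q_def
    apply (subst mult_four_block_mat[OF I(2) I(2) I(2) I(2) c2])
    by (intro cong_four_block_mat; intro eq_matI; use c c2 in \<open>simp add: smult_one_mat_mult algebra_simps\<close>)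
qed


lemma pos_def_cmat_congruence:
  fixes K U V :: "complex mat"
  assumes pK: "pos_def_cmat K" and K: "K \<in> carrier_mat n n"
    and U: "U \<in> carrier_mat n n" and V: "V \<in> carrier_mat n n" "V * U = 1\<^sub>m n"
  shows "pos_def_cmat (mat_adjoint U * K * U)"
proof -
  have aU: "mat_adjoint U \<in> carrier_mat n n" using U by simp
  have "Re (quad_form (mat_adjoint U * K * U) w) > 0" if w: "w \<in> carrier_vec n" "w \<noteq> 0\<^sub>v n" for w
  proof -
    have Uw: "U *\<^sub>v w \<in> carrier_vec n" using U w by simp
    have "V *\<^sub>v (U *\<^sub>v w) = w" using assoc_mult_mat_vec[OF V(1) U w(1)] V(2) w(1) by simp
    then have "U *\<^sub>v w \<noteq> 0\<^sub>v n" using w(2) V(1) by auto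
    moreover have "quad_form (mat_adjoint U * K * U) w = quad_form K (U *\<^sub>v w)"
      using scalar_prod_mat_adjoint[OF aU w(1), of "K *\<^sub>v (U *\<^sub>v w)"] K Uw w(1)
        assoc_mult_mat_vec[OF mult_carrier_mat[OF aU K] U w(1)] assoc_mult_mat_vec[OF aU K Uw]
      by (simp add: quad_form_def)
    ultimately show ?thesis using pos_def_cmatD[OF pK K Uw] by simp
  qed
  moreover have "hermitian_mat (mat_adjoint U * K * U)"
    using hermitian_mat_congruence[OF _ K U] pK unfolding pos_def_cmat_def by blast
  moreover have "mat_adjoint U * K * U \<in> carrier_mat n n" using mult_carrier_mat[OF mult_carrier_mat[OF aU K] U] .
  ultimately show ?thesis using pos_def_cmat_iff_quad_form by blast
qed

lemma pos_def_cmat_mat_inverse: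
  assumes "pos_def_cmat P" "P \<in> carrier_mat n n"
  obtains Q where "mat_inverse P = Some Q" "Q \<in> carrier_mat n n" "P * Q = 1\<^sub>m n"
proof -
  have "mat_inverse P \<noteq> None"
    using mat_inverse(1)[OF assms(2), of undefined]
      det_non_zero_imp_unit[OF assms(2) pos_def_cmat_det_nonzero[OF assms], of undefined] by auto
  then obtain Q where "mat_inverse P = Some Q" by auto
  then show thesis using that mat_inverse(2)[OF assms(2)] by blast
qed

lemma cond_num_le_of_interlacing:
  assumes pH: "pos_def_cmat H" "H \<in> carrier_mat (n + n) (n + n)" and T: "T \<in> carrier_mat n n"
    and interlacing: "\<forall>k\<in>{1..n}. lam H k \<le> lam T k \<and> lam T k \<le> lam H (k + n)"
  shows "cond_num T \<le> cond_num H"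
proof (cases "n = 0")
  case True
  \<comment> \<open>both condition numbers are then the same unspecified value \<open>[] ! 0 / [] ! 0\<close>\<close>
  have "eig_list X = []" if "X \<in> carrier_mat 0 0" for X
    using eig_mset_factorized[OF that] by (metis eig_list_def image_mset_empty length_0_conv
        mset.simps(1) sorted_list_of_multiset_empty)
  then show ?thesis using True pH(2) T by (simp add: cond_num_def lam_def)
next
  case False
  then have n: "1 \<in> {1..n}" "n \<in> {1..n}" by auto
  have "lam H 1 > 0" "lam H n > 0" using pos_def_cmat_lam_pos[OF pH] False by simp_all
  then have "lam T n / lam T 1 \<le> lam H (n + n) / lam H 1"
    using interlacing n by (intro frac_le) fastforce+
  then show ?thesis using pH(2) T by (simp add: cond_num_def)
qed

lemma cmat_four_block_mat:
  assumes "B \<in> carrier_mat n1 m1" "C \<in> carrier_mat n1 m2" "T \<in> carrier_mat n2 m1" "D \<in> carrier_mat n2 m2"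
  shows "cmat (four_block_mat B C T D) = four_block_mat (cmat B) (cmat C) (cmat T) (cmat D)"
  using map_four_block_mat[OF assms] by (simp add: cmat_def)

lemma cconj_mat_complex_form_blocks:
  assumes "X \<in> carrier_mat n n" "Y \<in> carrier_mat n n" "Z \<in> carrier_mat n n" "W \<in> carrier_mat n n"
  shows "cconj_mat ((1/2) \<cdot>\<^sub>m (cmat X + cmat Y - \<i> \<cdot>\<^sub>m (cmat Z - cmat W)))
      = (1/2) \<cdot>\<^sub>m (cmat X + cmat Y + \<i> \<cdot>\<^sub>m (cmat Z - cmat W))"
    and "cconj_mat ((1/2) \<cdot>\<^sub>m (cmat X - cmat Y + \<i> \<cdot>\<^sub>m (cmat Z + cmat W)))
      = (1/2) \<cdot>\<^sub>m (cmat X - cmat Y - \<i> \<cdot>\<^sub>m (cmat Z + cmat W))"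
  using assms by (auto intro!: eq_matI simp: cconj_mat_def cmat_def)


lemma complex_form_unitary_congruence:
  assumes B: "B \<in> carrier_mat n n" and C: "C \<in> carrier_mat n n" and D: "D \<in> carrier_mat n n"
  defines "M \<equiv> (1/2 :: complex) \<cdot>\<^sub>m (cmat B + cmat D - \<i> \<cdot>\<^sub>m (cmat C - cmat (transpose_mat C)))"
    and "N \<equiv> (1/2 :: complex) \<cdot>\<^sub>m (cmat B - cmat D + \<i> \<cdot>\<^sub>m (cmat C + cmat (transpose_mat C)))"
  shows "four_block_mat M N (cconj_mat N) (cconj_mat M) = mat_adjoint (complex_coordinates_mat n)
    * cmat (four_block_mat B C (transpose_mat C) D) * complex_coordinates_mat n"
proof -
  have Ct: "transpose_mat C \<in> carrier_mat n n" using C by simp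
  show ?thesis
    using complex_coordinates_congruence[OF cmat_carrier[OF B] cmat_carrier[OF C] cmat_carrier[OF Ct] cmat_carrier[OF D]]
      cmat_four_block_mat[OF B C Ct D] cconj_mat_complex_form_blocks[OF B D C Ct]
    by (simp add: M_def N_def)
qed

lemma lam_eq_if_eig_mset_eq: "eig_mset X = eig_mset Y \<Longrightarrow> lam X = lam Y"
  by (simp add: lam_def eig_list_def fun_eq_iff)

theorem mainTheorem5:
  fixes n :: nat and B C D :: "real mat"
  defines "A \<equiv> four_block_mat B C (transpose_mat C) D"
    and "M \<equiv> (1/2 :: complex) \<cdot>\<^sub>m (cmat B + cmat D - \<i> \<cdot>\<^sub>m (cmat C - cmat (transpose_mat C)))"
    and "N \<equiv> (1/2 :: complex) \<cdot>\<^sub>m (cmat B - cmat D + \<i> \<cdot>\<^sub>m (cmat C + cmat (transpose_mat C)))"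
  defines "S \<equiv> M - N * the (mat_inverse (cconj_mat M)) * cconj_mat N"
  assumes "B \<in> carrier_mat n n" and "C \<in> carrier_mat n n" and "D \<in> carrier_mat n n"
    and "pos_def_rmat A"
  shows "hermitian_mat (four_block_mat M N (cconj_mat N) (cconj_mat M))
    \<and> eig_mset (four_block_mat M N (cconj_mat N) (cconj_mat M)) = eig_mset (cmat A)
    \<and> pos_def_cmat M
    \<and> pos_def_cmat S
    \<and> (\<forall>k\<in>{1..n}. lam (cmat A) k \<le> lam M k \<and> lam M k \<le> lam (cmat A) (k + n))
    \<and> (\<forall>k\<in>{1..n}. lam (cmat A) k \<le> lam S k \<and> lam S k \<le> lam (cmat A) (k + n))
    \<and> cond_num M \<le> cond_num (cmat A)
    \<and> cond_num S \<le> cond_num (cmat A)"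
proof -
  have A: "A \<in> carrier_mat (n + n) (n + n)" using assms(5,7) by (simp add: A_def)
  have M: "M \<in> carrier_mat n n" and N: "N \<in> carrier_mat n n" unfolding M_def N_def
    using assms(5-7) by (intro smult_carrier_mat add_carrier_mat minus_carrier_mat cmat_carrier; simp)+
  have U: "complex_coordinates_mat n \<in> carrier_mat (n + n) (n + n)"
    "mat_adjoint (complex_coordinates_mat n) * complex_coordinates_mat n = 1\<^sub>m (n + n)"
    using complex_coordinates_mat_carrier complex_coordinates_mat_unitary by auto
  note H = complex_form_unitary_congruence[OF assms(5-7), folded A_def M_def N_def]
  have pH: "pos_def_cmat (four_block_mat M N (cconj_mat N) (cconj_mat M))"
    unfolding H using pos_def_cmat_congruence[OF pos_def_cmat_cmat[OF assms(8) A] cmat_carrier[OF A] U(1)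
        mat_adjoint_carrier[OF U(1)] U(2)] .
  have eig: "eig_mset (four_block_mat M N (cconj_mat N) (cconj_mat M)) = eig_mset (cmat A)"
    unfolding H using eig_mset_unitary_congruence[OF U cmat_carrier[OF A]] .
  have Hc: "four_block_mat M N (cconj_mat N) (cconj_mat M) \<in> carrier_mat (n + n) (n + n)"
    using M cconj_mat_carrier[OF M] by simp
  have cond: "cond_num (four_block_mat M N (cconj_mat N) (cconj_mat M)) = cond_num (cmat A)"
    using carrier_matD[OF Hc] carrier_matD[OF cmat_carrier[OF A]] lam_eq_if_eig_mset_eq[OF eig]
    by (simp add: cond_num_def)
  obtain Q where Q: "mat_inverse (cconj_mat M) = Some Q" "Q \<in> carrier_mat n n" "cconj_mat M * Q = 1\<^sub>m n"
    using pos_def_cmat_mat_inverse[OF pos_def_cmat_diag_blocks(2)[OF pH M N cconj_mat_carrier[OF N]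
          cconj_mat_carrier[OF M]] cconj_mat_carrier[OF M]] by blast
  have S: "S = M - N * Q * cconj_mat N" by (simp add: S_def Q(1))
  note schur = M N cconj_mat_carrier[OF N] cconj_mat_carrier[OF M] Q(2) pH Q(3)
  note interlacing = lam_interlacing_upper_left_block[OF schur] lam_interlacing_schur_complement[OF schur]
  show ?thesis
    unfolding S lam_eq_if_eig_mset_eq[OF eig, symmetric] cond[symmetric]
    using pH eig pos_def_cmat_diag_blocks(1)[OF pH M N cconj_mat_carrier[OF N] cconj_mat_carrier[OF M]]
      pos_def_schur_complement[OF schur] interlacing
      cond_num_le_of_interlacing[OF pH Hc M] cond_num_le_of_interlacing[OF pH Hc schur_complement_carrier[OF schur]]
    unfolding pos_def_cmat_def[of "four_block_mat M N (cconj_mat N) (cconj_mat M)"] by auto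
qed

end
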